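(* Let $p$ be a prime and $F$ an arbitrary field. Let $F'|F$ be a cyclic extension of degree dividing $p-1$ and let $L|F'$ be a cyclic extension of degree $p$. If $L|F$ is galoisian, then there exists a (solvable) degree-$p$ extension $E|F$ such that $L=EF'$; any two such extensions $E$ are conjugate over $F$; and every $F$-conjugate of $E$ is contained in $L$.
   Context: A degree-$p$ extension $E$ of a field $F$ is called solvable if it is separable and the Galois group of its Galois closure over $F$ is solvable. All extensions are taken inside a fixed separable algebraic closure of $F$. *)

theory Defs
  imports "HOL-Algebra.Solvable_Groups" "HOL-Computational_Algebra.Polynomial"
begin

text \<open>Ambient field: the type 'a (playing the role of the fixed separable
algebraic closure Omega of F).  Subfields of Omega are sets of elements.\<close>

definition is_subfield :: "'a::field set \<Rightarrow> bool" where
  "is_subfield K \<longleftrightarrow> 0 \<in> K \<and> 1 \<in> K \<and>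
     (\<forall>x\<in>K. \<forall>y\<in>K. x + y \<in> K \<and> x * y \<in> K) \<and>
     (\<forall>x\<in>K. - x \<in> K) \<and> (\<forall>x\<in>K. x \<noteq> 0 \<longrightarrow> inverse x \<in> K)"

definition is_basis_over :: "'a::field set \<Rightarrow> 'a set \<Rightarrow> 'a list \<Rightarrow> bool" where
  "is_basis_over K L bs \<longleftrightarrow> set bs \<subseteq> L \<and>
     (\<forall>c. (\<forall>i. c i \<in> K) \<longrightarrow> (\<Sum>i<length bs. c i * bs ! i) = 0 \<longrightarrow> (\<forall>i<length bs. c i = 0)) \<and>
     L = {(\<Sum>i<length bs. c i * bs ! i) | c. \<forall>i. c i \<in> K}"

definition ext_degree :: "'a::field set \<Rightarrow> 'a set \<Rightarrow> nat \<Rightarrow> bool" where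
  "ext_degree K L n \<longleftrightarrow> is_subfield K \<and> is_subfield L \<and> K \<subseteq> L \<and>
     (\<exists>bs. is_basis_over K L bs \<and> length bs = n)"

definition Aut :: "'a::field set \<Rightarrow> 'a set \<Rightarrow> ('a \<Rightarrow> 'a) set" where
  "Aut K L = {\<sigma>. bij_betw \<sigma> L L \<and>
     (\<forall>x\<in>L. \<forall>y\<in>L. \<sigma> (x + y) = \<sigma> x + \<sigma> y \<and> \<sigma> (x * y) = \<sigma> x * \<sigma> y) \<and>
     (\<forall>x\<in>K. \<sigma> x = x) \<and> (\<forall>x. x \<notin> L \<longrightarrow> \<sigma> x = x)}"

definition Gal :: "'a::field set \<Rightarrow> 'a set \<Rightarrow> ('a \<Rightarrow> 'a) monoid" where
  "Gal K L = \<lparr>carrier = Aut K L, monoid.mult = (\<circ>), one = id\<rparr>"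

definition galois_ext :: "'a::field set \<Rightarrow> 'a set \<Rightarrow> bool" where
  "galois_ext K L \<longleftrightarrow> (\<exists>n. ext_degree K L n \<and> card (Aut K L) = n)"

definition cyclic_ext :: "'a::field set \<Rightarrow> 'a set \<Rightarrow> bool" where
  "cyclic_ext K L \<longleftrightarrow> galois_ext K L \<and>
     (\<exists>\<sigma>\<in>Aut K L. \<forall>\<tau>\<in>Aut K L. \<exists>n. \<tau> = \<sigma> ^^ n)"

definition separable_over :: "'a::field set \<Rightarrow> 'a \<Rightarrow> bool" where
  "separable_over K x \<longleftrightarrow> (\<exists>f. f \<noteq> 0 \<and> (\<forall>i. coeff f i \<in> K) \<and> poly f x = 0 \<and>
     coprime f (pderiv f))"

definition separable_ext :: "'a::field set \<Rightarrow> 'a set \<Rightarrow> bool" where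
  "separable_ext K E \<longleftrightarrow> (\<forall>x\<in>E. separable_over K x)"

definition sep_alg_closure_of :: "'a::field set \<Rightarrow> bool" where
  "sep_alg_closure_of K \<longleftrightarrow> is_subfield K \<and> (\<forall>x. separable_over K x) \<and>
     (\<forall>f :: 'a poly. degree f \<ge> 1 \<and> coprime f (pderiv f) \<longrightarrow> (\<exists>x. poly f x = 0))"

definition compositum :: "'a::field set \<Rightarrow> 'a set \<Rightarrow> 'a set" where
  "compositum E F' = \<Inter>{K. is_subfield K \<and> E \<union> F' \<subseteq> K}"

definition galois_closure :: "'a::field set \<Rightarrow> 'a set \<Rightarrow> 'a set" where
  "galois_closure K E = \<Inter>{M. is_subfield M \<and> E \<subseteq> M \<and> galois_ext K M}"

definition solvable_ext :: "'a::field set \<Rightarrow> 'a set \<Rightarrow> bool" where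
  "solvable_ext K E \<longleftrightarrow> separable_ext K E \<and> galois_ext K (galois_closure K E) \<and>
     solvable (Gal K (galois_closure K E))"

definition conjugate_over :: "'a::field set \<Rightarrow> 'a set \<Rightarrow> 'a set \<Rightarrow> bool" where
  "conjugate_over K E E' \<longleftrightarrow> (\<exists>\<sigma>.
     (\<forall>x\<in>E. \<forall>y\<in>E. \<sigma> (x + y) = \<sigma> x + \<sigma> y \<and> \<sigma> (x * y) = \<sigma> x * \<sigma> y) \<and>
     \<sigma> 1 = 1 \<and> (\<forall>x\<in>K. \<sigma> x = x) \<and> \<sigma> ` E = E')"

end

theory Submission
  imports Defs "HOL-Algebra.Embedded_Algebras" "HOL-Algebra.Multiplicative_Group"
begin

(* Let G = Gal(L|F), P = Gal(L|F') (cyclic of order p) and G/P = Gal(F'|F) (cyclic of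
   order d, with d dividing p - 1, so d < p and d is coprime to p).  A degree-p
   subextension E of L with EF' = L corresponds to a subgroup H = Gal(L|E) of order d
   meeting P trivially, i.e. to a complement of P in G.

   Existence: lift a generator theta of G/P to g in G; then g^p has order exactly d and
   its fixed field E0 has degree p over F and satisfies E0 F' = L.  E0 is solvable: G is
   cyclic-by-cyclic, hence solvable, and the Galois group of the Galois closure of E0
   (which lies in L) is a quotient of G.
   Conjugacy: each such E is the fixed field of a single h in G mapping to theta; for two
   such elements h1, h2 = h1 y (y in P) a counting argument in the normal subgroup P of
   prime order yields x in P with x h1 x^-1 = h2, and then x maps E1 onto E2.
   Containment: any F-embedding of E extends to an automorphism of the Galois
   extension L, so every conjugate of E lies in L. *)

section \<open>The ambient field as a HOL-Algebra field\<close>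

text \<open>The ambient type, viewed as a HOL-Algebra ring, so that subfields become
  subfields in the sense of HOL-Algebra and degrees become dimensions.\<close>
definition Omega :: "'a::field ring" where
  "Omega = \<lparr>carrier = UNIV, monoid.mult = (*), one = 1, zero = 0, add = (+)\<rparr>"

lemma Omega_simps [simp]: "carrier Omega = UNIV" "monoid.mult Omega = (*)" "one Omega = 1"
  "zero Omega = 0" "add Omega = (+)"
  by (simp_all add: Omega_def)

lemma Omega_cring: "cring (Omega::'a::field ring)"
proof (rule cringI)
  show "abelian_group (Omega::'a ring)"
    by (rule abelian_groupI) (auto intro: left_minus)
  show "Group.comm_monoid (Omega::'a ring)"
    by (rule monoid.monoid_comm_monoidI) (auto intro!: Group.monoid.intro simp: mult.commute mult.assoc)
qed (auto simp: distrib_right)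

lemma Omega_field: "field (Omega::'a::field ring)"
proof -
  interpret cring "Omega::'a ring" by (rule Omega_cring)
  show ?thesis
    by (rule cring_fieldI2) (simp_all, metis right_inverse)
qed

interpretation Omega: field "Omega::'a::field ring"
  by (rule Omega_field)

lemma Omega_a_inv [simp]: "a_inv Omega x = - (x::'a::field)"
  by (rule Omega.minus_equality) auto

lemma Omega_m_inv [simp]: "(x::'a::field) \<noteq> 0 \<Longrightarrow> m_inv Omega x = inverse x"
  by (rule Omega.inv_char) auto

lemma is_subfieldD:
  assumes "is_subfield K"
  shows "0 \<in> K" "1 \<in> K" "\<And>x y. x \<in> K \<Longrightarrow> y \<in> K \<Longrightarrow> x + y \<in> K"
    "\<And>x y. x \<in> K \<Longrightarrow> y \<in> K \<Longrightarrow> x * y \<in> K" "\<And>x. x \<in> K \<Longrightarrow> - x \<in> K"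
    "\<And>x. x \<in> K \<Longrightarrow> x \<noteq> 0 \<Longrightarrow> inverse x \<in> K"
  using assms unfolding is_subfield_def by auto

lemma is_subfield_diff: "is_subfield K \<Longrightarrow> x \<in> K \<Longrightarrow> y \<in> K \<Longrightarrow> x - y \<in> K"
  using is_subfieldD[of K] by (metis diff_conv_add_uminus)

lemma is_subfield_div: "is_subfield K \<Longrightarrow> x \<in> K \<Longrightarrow> y \<in> K \<Longrightarrow> x / y \<in> K"
  using is_subfieldD[of K] by (cases "y = 0") (auto simp: divide_inverse)

lemma is_subfield_sum: "is_subfield K \<Longrightarrow> (\<And>i. i \<in> A \<Longrightarrow> f i \<in> K) \<Longrightarrow> sum f A \<in> K"
  using is_subfieldD[of K]
  by (induction A rule: infinite_finite_induct) auto

lemma is_subfield_UNIV: "is_subfield UNIV"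
  unfolding is_subfield_def by auto

lemma is_subfield_Inter:
  assumes A: "\<forall>K\<in>S. is_subfield K" and ne: "S \<noteq> {}" shows "is_subfield (\<Inter>S)"
proof -
  have D: "is_subfield K" if "K \<in> S" for K using A that by blast
  have a: "0 \<in> \<Inter>S" "1 \<in> \<Inter>S" using is_subfieldD(1,2)[OF D] by auto
  have b: "x + y \<in> \<Inter>S" "x * y \<in> \<Inter>S" if "x \<in> \<Inter>S" "y \<in> \<Inter>S" for x y
    using that is_subfieldD(3,4)[OF D] by auto
  have c: "- x \<in> \<Inter>S" if "x \<in> \<Inter>S" for x using that is_subfieldD(5)[OF D] by auto
  have e: "inverse x \<in> \<Inter>S" if "x \<in> \<Inter>S" "x \<noteq> 0" for x using that is_subfieldD(6)[OF D] by auto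
  show ?thesis unfolding is_subfield_def
    by (intro conjI ballI impI; (rule a b c e; assumption)?)
qed

lemma subfield_Omega: "is_subfield K \<Longrightarrow> subfield K (Omega::'a::field ring)"
  unfolding is_subfield_def
  apply (rule Omega.subfieldI')
   apply (rule Omega.subringI)
  by auto

lemma subalgebra_Omega:
  assumes "is_subfield M" "K \<subseteq> M"
  shows "subalgebra K M (Omega::'a::field ring)"
proof -
  have "subgroup M (add_monoid (Omega::'a ring))"
    by (rule Omega.add.subgroupI) (use is_subfieldD[OF assms(1)] in auto)
  then show ?thesis
    unfolding subalgebra_def subalgebra_axioms_def using is_subfieldD[OF assms(1)] assms(2) by auto
qed

section \<open>Degrees of extensions as dimensions\<close>

lemma combine_sum:
  "length Ks = length Us \<Longrightarrow> Omega.combine Ks Us = (\<Sum>i<length Us. Ks!i * Us!i)"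
proof (induction Us arbitrary: Ks)
  case Nil
  then show ?case by simp
next
  case (Cons u Us)
  then obtain k Ks' where Ks: "Ks = k # Ks'" "length Ks' = length Us"
    by (cases Ks) auto
  have "(\<Sum>i<length (u#Us). Ks!i * (u#Us)!i) = k * u + (\<Sum>i<length Us. Ks'!i * Us!i)"
    unfolding Ks(1) length_Cons sum.lessThan_Suc_shift by simp
  then show ?case using Cons.IH[OF Ks(2)] Ks by simp
qed

lemma combine_map:
  "Omega.combine (map c [0..<length Us]) Us = (\<Sum>i<length Us. c i * Us!i)"
  by (subst combine_sum) auto

lemma Span_eq_sums:
  assumes K: "is_subfield K"
  shows "Omega.Span K bs = {(\<Sum>i<length bs. c i * bs ! i) | c. \<forall>i. c i \<in> K}"
proof -
  have "Omega.Span K bs = {Omega.combine Ks bs | Ks. length Ks = length bs \<and> set Ks \<subseteq> K}"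
    by (rule Omega.Span_eq_combine_set_length_version) (use subfield_Omega[OF K] in auto)
  also have "\<dots> = {(\<Sum>i<length bs. c i * bs ! i) | c. \<forall>i. c i \<in> K}"
  proof (intro equalityI subsetI)
    fix x assume "x \<in> {Omega.combine Ks bs | Ks. length Ks = length bs \<and> set Ks \<subseteq> K}"
    then obtain Ks where Ks: "length Ks = length bs" "set Ks \<subseteq> K" "x = Omega.combine Ks bs" by blast
    define c where "c i = (if i < length bs then Ks ! i else 0)" for i
    have "\<forall>i. c i \<in> K" using Ks K unfolding c_def is_subfield_def by (auto simp: nth_mem)
    moreover have "x = (\<Sum>i<length bs. c i * bs ! i)"
      using Ks by (simp add: combine_sum c_def)
    ultimately show "x \<in> {(\<Sum>i<length bs. c i * bs ! i) | c. \<forall>i. c i \<in> K}" by blast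
  next
    fix x assume "x \<in> {(\<Sum>i<length bs. c i * bs ! i) | c. \<forall>i. c i \<in> K}"
    then obtain c where c: "\<forall>i. c i \<in> K" "x = (\<Sum>i<length bs. c i * bs ! i)" by blast
    then show "x \<in> {Omega.combine Ks bs | Ks. length Ks = length bs \<and> set Ks \<subseteq> K}"
      by (intro CollectI exI[of _ "map c [0..<length bs]"]) (auto simp: combine_map)
  qed
  finally show ?thesis .
qed

lemma independent_iff_sums:
  assumes K: "is_subfield K"
  shows "Omega.independent K bs \<longleftrightarrow>
    (\<forall>c. (\<forall>i. c i \<in> K) \<longrightarrow> (\<Sum>i<length bs. c i * bs ! i) = 0 \<longrightarrow> (\<forall>i<length bs. c i = 0))"
proof
  assume I: "Omega.independent K bs"
  show "\<forall>c. (\<forall>i. c i \<in> K) \<longrightarrow> (\<Sum>i<length bs. c i * bs ! i) = 0 \<longrightarrow> (\<forall>i<length bs. c i = 0)"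
  proof (intro allI impI)
    fix c i assume c: "\<forall>i. c i \<in> K" "(\<Sum>i<length bs. c i * bs ! i) = 0" and i: "i < length bs"
    have "set (take (length bs) (map c [0..<length bs])) \<subseteq> {0}"
      using Omega.independent_imp_trivial_combine[OF subfield_Omega[OF K] I, of "map c [0..<length bs]"] c
      by (auto simp: combine_map)
    then show "c i = 0" using i by (auto simp: set_conv_nth)
  qed
next
  assume H: "\<forall>c. (\<forall>i. c i \<in> K) \<longrightarrow> (\<Sum>i<length bs. c i * bs ! i) = 0 \<longrightarrow> (\<forall>i<length bs. c i = 0)"
  show "Omega.independent K bs"
  proof (rule Omega.trivial_combine_imp_independent[OF subfield_Omega[OF K]])
    fix Ks assume Ks0: "set Ks \<subseteq> K" "Omega.combine Ks bs = \<zero>\<^bsub>Omega\<^esub>"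
    hence Ks: "set Ks \<subseteq> K" "Omega.combine Ks bs = 0" by simp_all
    define c where "c i = (if i < length Ks then Ks ! i else 0)" for i
    have cK: "\<forall>i. c i \<in> K" using Ks K unfolding c_def is_subfield_def by (auto simp: nth_mem)
    have "Omega.combine Ks bs = Omega.combine (take (length bs) Ks) bs"
      by (rule Omega.combine_take[symmetric])
    also have "take (length bs) Ks @ replicate (length bs - length Ks) 0 = map c [0..<length bs]"
      by (rule nth_equalityI) (auto simp: c_def nth_append)
    hence "Omega.combine (take (length bs) Ks) bs = Omega.combine (map c [0..<length bs]) bs"
      using Omega.combine_append_replicate[of bs "take (length bs) Ks" "length bs - length Ks"] by simp
    finally have "(\<Sum>i<length bs. c i * bs ! i) = 0" using Ks by (simp add: combine_map)
    hence "\<forall>i<length bs. c i = 0" using H cK by blast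
    then show "set (take (length bs) Ks) \<subseteq> { \<zero>\<^bsub>Omega\<^esub> }"
      by (auto simp: set_conv_nth c_def)
  qed simp
qed

lemma basis_iff:
  assumes K: "is_subfield K"
  shows "is_basis_over K L bs \<longleftrightarrow> set bs \<subseteq> L \<and> Omega.independent K bs \<and> Omega.Span K bs = L"
  unfolding is_basis_over_def Span_eq_sums[OF K] independent_iff_sums[OF K] by blast

lemma ext_degree_dim:
  "ext_degree K L n \<longleftrightarrow> is_subfield K \<and> is_subfield L \<and> K \<subseteq> L \<and> Omega.dimension n K L"
proof
  assume "ext_degree K L n"
  then obtain bs where bs: "is_subfield K" "is_subfield L" "K \<subseteq> L" "is_basis_over K L bs" "length bs = n"
    unfolding ext_degree_def by blast
  then have "Omega.independent K bs" "Omega.Span K bs = L" using basis_iff by blast+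
  then show "is_subfield K \<and> is_subfield L \<and> K \<subseteq> L \<and> Omega.dimension n K L"
    using Omega.dimensionI[OF subfield_Omega[OF bs(1)]] bs by blast
next
  assume H: "is_subfield K \<and> is_subfield L \<and> K \<subseteq> L \<and> Omega.dimension n K L"
  then obtain Vs where "set Vs \<subseteq> carrier Omega" "Omega.independent K Vs" "length Vs = n" "Omega.Span K Vs = L"
    using Omega.exists_base[OF subfield_Omega] by blast
  moreover have "set Vs \<subseteq> L"
    using Omega.Span_base_incl[OF subfield_Omega[of K]] H calculation by auto
  ultimately show "ext_degree K L n"
    using H basis_iff unfolding ext_degree_def by blast
qed

lemma ext_degree_unique: "ext_degree K L n \<Longrightarrow> ext_degree K L m \<Longrightarrow> n = m"
  unfolding ext_degree_dim using Omega.dimension_is_inj subfield_Omega by blast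

lemma ext_degree_tower:
  assumes "ext_degree K M m" "ext_degree M L n"
  shows "ext_degree K L (m * n)"
  using assms unfolding ext_degree_dim
  using Omega.telescopic_base[OF subfield_Omega subfield_Omega] by blast

lemma ext_degree_sub:
  assumes "ext_degree K L n" "is_subfield M" "K \<subseteq> M" "M \<subseteq> L"
  obtains a b where "ext_degree K M a" "ext_degree M L b"
proof -
  have K: "is_subfield K" "subfield K Omega" and L: "is_subfield L" and D: "Omega.dimension n K L"
    and M: "subfield M Omega"
    using assms subfield_Omega unfolding ext_degree_dim by blast+
  have "Omega.finite_dimension K M"
    by (rule Omega.subalbegra_incl_imp_finite_dimension[OF K(2) Omega.finite_dimensionI[OF D]
          subalgebra_Omega[OF assms(2,3)] assms(4)])
  then obtain a where a: "ext_degree K M a"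
    using assms K L unfolding ext_degree_dim Omega.finite_dimension_def by blast
  obtain Vs where Vs: "set Vs \<subseteq> carrier Omega" "Omega.Span K Vs = L"
    using Omega.exists_base[OF K(2) D] by blast
  have "L \<subseteq> Omega.Span M Vs"
  proof -
    have "Omega.Span K Vs \<subseteq> Omega.Span M Vs"
      by (rule Omega.subalgebra_Span_incl[OF K(2)])
        (use Omega.Span_is_subalgebra[OF M Vs(1)] assms(3) Omega.Span_base_incl[OF M Vs(1)]
          in \<open>auto simp: subalgebra_def subalgebra_axioms_def\<close>)
    then show ?thesis using Vs by simp
  qed
  moreover have "Omega.Span M Vs \<subseteq> L"
    using Omega.subalgebra_Span_incl[OF M subalgebra_Omega[OF L]] assms(3,4)
      Omega.Span_base_incl[OF K(2) Vs(1)] Vs by auto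
  ultimately have "Omega.Span M Vs = L" by blast
  moreover have "Omega.finite_dimension M (Omega.Span M Vs)"
    using Omega.Span_finite_dimension[OF M Vs(1)] .
  ultimately obtain b where "ext_degree M L b"
    using assms L unfolding ext_degree_dim Omega.finite_dimension_def by auto
  with a that show ?thesis by blast
qed

lemma ext_degree_one: "ext_degree K L 1 \<Longrightarrow> K = L"
proof -
  assume A: "ext_degree K L 1"
  then have KL: "is_subfield K" "K \<subseteq> L" unfolding ext_degree_def by auto
  have "Omega.dimension 1 K K" using Omega.dimension_one[OF subfield_Omega[OF KL(1)]] .
  moreover have "Omega.dimension 1 K L" using A unfolding ext_degree_dim by blast
  moreover have "Omega.independent K [1]"
    by (rule Omega.li_Cons) (use Omega.Span.simps KL in auto)
  moreover have "set [1] \<subseteq> K" using is_subfieldD[OF KL(1)] by auto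
  ultimately have "Omega.Span K [1] = K" "Omega.Span K [1] = L"
    using Omega.independent_length_eq_dimension[OF subfield_Omega[OF KL(1)], of 1 _ "[1]"] KL(2) by auto
  then show ?thesis by simp
qed

lemma ext_degree_pos: "ext_degree K L n \<Longrightarrow> n \<ge> 1"
proof (rule ccontr)
  assume A: "ext_degree K L n" "\<not> n \<ge> 1"
  hence "n = 0" by simp
  hence D: "Omega.dimension 0 K L" and K: "is_subfield K" and L: "is_subfield L"
    using A(1) unfolding ext_degree_dim by simp_all
  have "L = {\<zero>\<^bsub>Omega\<^esub>}" by (rule Omega.dimension_zero[OF subfield_Omega[OF K] D])
  with L show False unfolding is_subfield_def by auto
qed

lemma ext_degree_tower_eq:
  "ext_degree K L n \<Longrightarrow> ext_degree K M a \<Longrightarrow> ext_degree M L b \<Longrightarrow> a * b = n"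
  using ext_degree_unique ext_degree_tower by blast

section \<open>Embeddings\<close>

definition is_embedding :: "'a::field set \<Rightarrow> 'a set \<Rightarrow> ('a \<Rightarrow> 'a) \<Rightarrow> bool" where
  "is_embedding K E \<sigma> \<longleftrightarrow> (\<forall>x\<in>E. \<forall>y\<in>E. \<sigma> (x + y) = \<sigma> x + \<sigma> y \<and> \<sigma> (x * y) = \<sigma> x * \<sigma> y) \<and>
     \<sigma> 1 = 1 \<and> (\<forall>x\<in>K. \<sigma> x = x)"

lemma embedding_add: "is_embedding K E \<sigma> \<Longrightarrow> x \<in> E \<Longrightarrow> y \<in> E \<Longrightarrow> \<sigma> (x + y) = \<sigma> x + \<sigma> y"
  and embedding_mult: "is_embedding K E \<sigma> \<Longrightarrow> x \<in> E \<Longrightarrow> y \<in> E \<Longrightarrow> \<sigma> (x * y) = \<sigma> x * \<sigma> y"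
  and embedding_one: "is_embedding K E \<sigma> \<Longrightarrow> \<sigma> 1 = 1"
  and embedding_fix: "is_embedding K E \<sigma> \<Longrightarrow> x \<in> K \<Longrightarrow> \<sigma> x = x"
  unfolding is_embedding_def by auto

lemma embedding_mono: "is_embedding K L \<sigma> \<Longrightarrow> K' \<subseteq> K \<Longrightarrow> E \<subseteq> L \<Longrightarrow> is_embedding K' E \<sigma>"
  unfolding is_embedding_def by blast

lemma embedding_zero: "is_embedding K E \<sigma> \<Longrightarrow> 0 \<in> E \<Longrightarrow> \<sigma> 0 = 0"
proof -
  assume a: "is_embedding K E \<sigma>" "0 \<in> E"
  have "\<sigma> 0 + \<sigma> 0 = \<sigma> 0 + 0" using embedding_add[OF a(1) a(2) a(2)] by simp
  then show "\<sigma> 0 = 0" by (rule add_left_imp_eq)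
qed

lemma embedding_sum:
  assumes "is_embedding K E \<sigma>" "is_subfield E" "\<And>i. i \<in> A \<Longrightarrow> f i \<in> E"
  shows "\<sigma> (sum f A) = (\<Sum>i\<in>A. \<sigma> (f i))"
  using assms(3)
proof (induction A rule: infinite_finite_induct)
  case (insert x F)
  then show ?case
    using embedding_add[OF assms(1)] is_subfield_sum[OF assms(2), of F f] by simp
qed (use embedding_zero[OF assms(1)] is_subfieldD[OF assms(2)] in simp_all)

lemma embedding_linear:
  assumes e: "is_embedding K E \<sigma>" and E: "is_subfield E" "K \<subseteq> E"
    and c: "\<And>i. i \<in> A \<Longrightarrow> c i \<in> K" and b: "\<And>i. i \<in> A \<Longrightarrow> b i \<in> E"
  shows "\<sigma> (\<Sum>i\<in>A. c i * b i) = (\<Sum>i\<in>A. c i * \<sigma> (b i))"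
proof -
  have "\<sigma> (\<Sum>i\<in>A. c i * b i) = (\<Sum>i\<in>A. \<sigma> (c i * b i))"
    by (rule embedding_sum[OF e E(1)]) (use c b E in \<open>auto intro!: is_subfieldD(4)[OF E(1)]\<close>)
  also have "\<dots> = (\<Sum>i\<in>A. c i * \<sigma> (b i))"
  proof (rule sum.cong)
    fix i assume i: "i \<in> A"
    then have "c i \<in> E" using c E(2) by blast
    then show "\<sigma> (c i * b i) = c i * \<sigma> (b i)"
      using embedding_mult[OF e _ b[OF i]] embedding_fix[OF e c[OF i]] by simp
  qed simp
  finally show ?thesis .
qed

lemma embedding_neg:
  assumes "is_embedding K E \<sigma>" "is_subfield E" "x \<in> E"
  shows "\<sigma> (- x) = - \<sigma> x"
proof -
  have "\<sigma> (x + - x) = \<sigma> x + \<sigma> (- x)"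
    using embedding_add[OF assms(1) assms(3) is_subfieldD(5)[OF assms(2,3)]] .
  moreover have "\<sigma> (x + - x) = 0" using embedding_zero[OF assms(1)] is_subfieldD(1)[OF assms(2)] by simp
  ultimately have "\<sigma> x + \<sigma> (- x) = 0" by simp
  then show ?thesis by (rule minus_unique[symmetric])
qed

lemma embedding_inverse:
  assumes "is_embedding K E \<sigma>" "is_subfield E" "x \<in> E"
  shows "\<sigma> (inverse x) = inverse (\<sigma> x)"
proof (cases "x = 0")
  case True then show ?thesis using embedding_zero[OF assms(1)] is_subfieldD[OF assms(2)] by simp
next
  case False
  have "1 = \<sigma> (x * inverse x)" using assms embedding_one False by simp
  also have "\<dots> = \<sigma> x * \<sigma> (inverse x)"
    using embedding_mult[OF assms(1) assms(3)] is_subfieldD(6)[OF assms(2,3) False] by simp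
  finally show ?thesis by (metis inverse_unique)
qed

definition fixed_field :: "'a::field set \<Rightarrow> ('a \<Rightarrow> 'a) set \<Rightarrow> 'a set" where
  "fixed_field L H = {x \<in> L. \<forall>h\<in>H. h x = x}"

lemma fixed_field_subfield:
  assumes L: "is_subfield L" and H: "\<And>h. h \<in> H \<Longrightarrow> is_embedding {} L h"
  shows "is_subfield (fixed_field L H)"
  unfolding is_subfield_def fixed_field_def using is_subfieldD[OF L]
  by (auto simp: embedding_add[OF H] embedding_mult[OF H] embedding_zero[OF H] embedding_one[OF H]
      embedding_neg[OF H L] embedding_inverse[OF H L])

section \<open>Dedekind's lemma and the number of embeddings\<close>

lemma sum_skip:
  fixes g :: "nat \<Rightarrow> 'b::comm_monoid_add"
  assumes "k < m"
  shows "(\<Sum>i<m. g i) = g k + (\<Sum>i<m - 1. g (if i < k then i else Suc i))"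
proof -
  let ?f = "\<lambda>i::nat. if i < k then i else Suc i"
  have inj: "inj_on ?f {..<m-1}" by (auto simp: inj_on_def split: if_splits)
  have img: "?f ` {..<m-1} = {..<m} - {k}"
  proof (intro equalityI subsetI)
    fix x assume "x \<in> ?f ` {..<m-1}" then show "x \<in> {..<m} - {k}" using assms by (auto split: if_splits)
  next
    fix x assume x: "x \<in> {..<m} - {k}"
    show "x \<in> ?f ` {..<m-1}"
    proof (cases "x < k")
      case True then show ?thesis using x assms by (intro image_eqI[of _ _ x]) auto
    next
      case False then show ?thesis using x assms by (intro image_eqI[of _ _ "x - 1"]) auto
    qed
  qed
  have "(\<Sum>i<m. g i) = g k + (\<Sum>i\<in>{..<m} - {k}. g i)"
    using assms by (simp add: sum.remove)
  also have "(\<Sum>i\<in>{..<m} - {k}. g i) = (\<Sum>i<m - 1. g (?f i))"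
    using sum.reindex[OF inj, of g] img by simp
  finally show ?thesis .
qed

text \<open>Gaussian elimination step: if the n-th equation has a nonzero coefficient at
  the unknown k, eliminating that unknown reduces n+1 equations in m unknowns to n
  equations in m-1 unknowns; a nontrivial solution of the reduced system lifts.\<close>
lemma homogeneous_system_eliminate:
  fixes a :: "nat \<Rightarrow> nat \<Rightarrow> 'a::field"
  assumes K: "is_subfield K" and aK: "\<forall>j i. a j i \<in> K" and k: "k < m" "a n k \<noteq> 0"
  defines "f \<equiv> \<lambda>i. if i < k then i else Suc i"
  assumes c': "\<forall>i. c' i \<in> K" "\<exists>i<m-1. c' i \<noteq> 0"
    "\<forall>j<n. (\<Sum>i<m-1. (a j (f i) - a j k * a n (f i) / a n k) * c' i) = 0"
  shows "\<exists>c. (\<forall>i. c i \<in> K) \<and> (\<exists>i<m. c i \<noteq> 0) \<and> (\<forall>j<Suc n. (\<Sum>i<m. a j i * c i) = 0)"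
proof -
  define s where "s = (\<Sum>i<m-1. a n (f i) * c' i)"
  define c where "c i = (if i = k then - s / a n k else if i < k then c' i else c' (i - 1))" for i
  have sK: "s \<in> K" unfolding s_def
    using c'(1) aK by (auto intro!: is_subfield_sum[OF K] is_subfieldD(4)[OF K])
  have cK: "\<forall>i. c i \<in> K" unfolding c_def
    using c'(1) sK aK by (auto intro!: is_subfield_div[OF K] is_subfieldD(5)[OF K])
  have cf: "c (f i) = c' i" for i unfolding c_def f_def by auto
  have sumc: "(\<Sum>i<m. a j i * c i) = a j k * c k + (\<Sum>i<m-1. a j (f i) * c' i)" for j
    using sum_skip[OF k(1), of "\<lambda>i. a j i * c i"] cf unfolding f_def by simp
  have "(\<Sum>i<m. a j i * c i) = 0" if j: "j < Suc n" for j
  proof (cases "j = n")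
    case True
    then show ?thesis using sumc[of n] k(2) unfolding c_def s_def by simp
  next
    case False
    hence "j < n" using j by simp
    have "(\<Sum>i<m-1. (a j (f i) - a j k * a n (f i) / a n k) * c' i) =
        (\<Sum>i<m-1. a j (f i) * c' i) - a j k / a n k * s"
      unfolding s_def by (simp add: sum_subtractf sum_distrib_left algebra_simps)
    moreover have "a j k * c k = - (a j k / a n k * s)" unfolding c_def by simp
    ultimately show ?thesis using sumc[of j] c'(3) \<open>j < n\<close> by simp
  qed
  moreover obtain i where i: "i < m - 1" "c' i \<noteq> 0" using c'(2) by blast
  then have "f i < m" "c (f i) \<noteq> 0" using cf unfolding f_def by auto
  ultimately show ?thesis using cK by blast
qed

lemma homogeneous_system_solvable:
  fixes a :: "nat \<Rightarrow> nat \<Rightarrow> 'a::field"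
  assumes K: "is_subfield K" and aK: "\<forall>j i. a j i \<in> K" and nm: "n < m"
  shows "\<exists>c. (\<forall>i. c i \<in> K) \<and> (\<exists>i<m. c i \<noteq> 0) \<and> (\<forall>j<n. (\<Sum>i<m. a j i * c i) = 0)"
  using aK nm
proof (induction n arbitrary: m a)
  case 0
  then show ?case using is_subfieldD[OF K]
    by (intro exI[of _ "\<lambda>i. if i = 0 then 1 else 0"]) auto
next
  case (Suc n)
  show ?case
  proof (cases "\<forall>i<m. a n i = 0")
    case True
    obtain c where c: "\<forall>i. c i \<in> K" "\<exists>i<m. c i \<noteq> 0" "\<forall>j<n. (\<Sum>i<m. a j i * c i) = 0"
      using Suc.IH[of a m] Suc.prems by auto
    have "\<forall>j<Suc n. (\<Sum>i<m. a j i * c i) = 0"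
      using c(3) True by (auto simp: less_Suc_eq)
    then show ?thesis using c by blast
  next
    case False
    then obtain k where k: "k < m" "a n k \<noteq> 0" by auto
    define f where "f i = (if i < k then i else Suc i)" for i
    define a' where "a' j i = a j (f i) - a j k * a n (f i) / a n k" for j i
    have "\<forall>j i. a' j i \<in> K"
      using Suc.prems(1) unfolding a'_def
      by (auto intro!: is_subfield_diff[OF K] is_subfield_div[OF K] is_subfieldD(4)[OF K])
    moreover have "n < m - 1" using Suc.prems by simp
    ultimately obtain c' where "\<forall>i. c' i \<in> K" "\<exists>i<m-1. c' i \<noteq> 0" "\<forall>j<n. (\<Sum>i<m-1. a' j i * c' i) = 0"
      using Suc.IH by blast
    then show ?thesis
      using homogeneous_system_eliminate[OF K Suc.prems(1) k] unfolding a'_def f_def by blast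
  qed
qed

text \<open>The elimination step of Dedekind's lemma: from a relation
  \<Sum>c(\<rho>) \<rho>(x) + c(\<tau>) \<tau>(x) = 0 on E, subtracting the relation at x multiplied by \<tau>(y)
  from the relation at x y removes the \<tau>-term.\<close>
lemma dedekind_eliminate:
  assumes E: "is_subfield E" and y: "y \<in> E"
    and hom: "\<forall>\<sigma>\<in>insert \<tau> S. \<forall>x\<in>E. \<forall>y\<in>E. \<sigma> (x * y) = \<sigma> x * \<sigma> y"
    and rel: "\<And>x. x \<in> E \<Longrightarrow> (\<Sum>\<rho>\<in>S. c \<rho> * \<rho> x) + c \<tau> * \<tau> x = (0::'a::field)"
    and x: "x \<in> E"
  shows "(\<Sum>\<rho>\<in>S. (c \<rho> * (\<rho> y - \<tau> y)) * \<rho> x) = 0"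
proof -
  have r1: "(\<Sum>\<rho>\<in>S. c \<rho> * (\<rho> x * \<rho> y)) + c \<tau> * (\<tau> x * \<tau> y) = 0"
    using rel[OF is_subfieldD(4)[OF E x y]] hom x y by simp
  have r2: "(\<Sum>\<rho>\<in>S. c \<rho> * \<rho> x * \<tau> y) + c \<tau> * \<tau> x * \<tau> y = 0"
  proof -
    have "((\<Sum>\<rho>\<in>S. c \<rho> * \<rho> x) + c \<tau> * \<tau> x) * \<tau> y = 0" using rel[OF x] by simp
    then show ?thesis by (simp only: distrib_right sum_distrib_right)
  qed
  have "(\<Sum>\<rho>\<in>S. (c \<rho> * (\<rho> y - \<tau> y)) * \<rho> x) =
      (\<Sum>\<rho>\<in>S. c \<rho> * (\<rho> x * \<rho> y)) - (\<Sum>\<rho>\<in>S. c \<rho> * \<rho> x * \<tau> y)"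
    by (simp add: sum_subtractf[symmetric] algebra_simps)
  also have "\<dots> = ((\<Sum>\<rho>\<in>S. c \<rho> * (\<rho> x * \<rho> y)) + c \<tau> * (\<tau> x * \<tau> y)) -
      ((\<Sum>\<rho>\<in>S. c \<rho> * \<rho> x * \<tau> y) + c \<tau> * \<tau> x * \<tau> y)"
    by (simp add: algebra_simps)
  also have "\<dots> = 0" by (simp only: r1 r2) simp
  finally show ?thesis .
qed

lemma dedekind:
  assumes E: "is_subfield E" and fin: "finite S"
    and hom: "\<forall>\<sigma>\<in>S. (\<forall>x\<in>E. \<forall>y\<in>E. \<sigma> (x * y) = \<sigma> x * \<sigma> y) \<and> \<sigma> 1 = 1"
    and dist: "\<forall>\<sigma>\<in>S. \<forall>\<tau>\<in>S. \<sigma> \<noteq> \<tau> \<longrightarrow> (\<exists>x\<in>E. \<sigma> x \<noteq> \<tau> x)"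
    and rel: "\<forall>x\<in>E. (\<Sum>\<sigma>\<in>S. c \<sigma> * \<sigma> x) = (0::'a::field)"
  shows "\<forall>\<sigma>\<in>S. c \<sigma> = 0"
  using fin hom dist rel
proof (induction S arbitrary: c rule: finite_induct)
  case empty
  then show ?case by simp
next
  case (insert \<tau> S)
  have hom: "\<forall>\<sigma>\<in>S. (\<forall>x\<in>E. \<forall>y\<in>E. \<sigma> (x * y) = \<sigma> x * \<sigma> y) \<and> \<sigma> 1 = 1"
    and dist: "\<forall>\<sigma>\<in>S. \<forall>\<tau>\<in>S. \<sigma> \<noteq> \<tau> \<longrightarrow> (\<exists>x\<in>E. \<sigma> x \<noteq> \<tau> x)"
    using insert.prems(1,2) by blast+
  have rel: "(\<Sum>\<sigma>\<in>S. c \<sigma> * \<sigma> x) + c \<tau> * \<tau> x = 0" if "x \<in> E" for x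
    using insert.prems(3) that insert.hyps by (simp add: add.commute)
  have cS: "\<forall>\<sigma>\<in>S. c \<sigma> = 0"
  proof
    fix \<sigma> assume \<sigma>: "\<sigma> \<in> S"
    have "\<sigma> \<noteq> \<tau>" using \<sigma> insert.hyps by auto
    then obtain y where y: "y \<in> E" "\<sigma> y \<noteq> \<tau> y"
      using insert.prems(2) \<sigma> by blast
    have "\<forall>x\<in>E. (\<Sum>\<rho>\<in>S. (c \<rho> * (\<rho> y - \<tau> y)) * \<rho> x) = 0"
      using dedekind_eliminate[OF E y(1) _ rel] insert.prems(1) by blast
    then have "\<forall>\<rho>\<in>S. c \<rho> * (\<rho> y - \<tau> y) = 0"
      using insert.IH[OF hom dist, of "\<lambda>\<rho>. c \<rho> * (\<rho> y - \<tau> y)"] by blast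
    then show "c \<sigma> = 0" using \<sigma> y(2) by auto
  qed
  have "c \<tau> = 0"
    using rel[OF is_subfieldD(2)[OF E]] cS insert.prems(1) by simp
  then show ?case using cS by simp
qed

text \<open>An extension of degree n has at most n pairwise distinct K-embeddings: more
  embeddings would admit a nontrivial relation on a basis, contradicting Dedekind.\<close>
lemma embedding_count:
  assumes deg: "ext_degree K E n" and fin: "finite S" and embs: "\<forall>\<sigma>\<in>S. is_embedding K E \<sigma>"
    and dist: "\<forall>\<sigma>\<in>S. \<forall>\<tau>\<in>S. \<sigma> \<noteq> \<tau> \<longrightarrow> (\<exists>x\<in>E. \<sigma> x \<noteq> \<tau> x)"
  shows "card S \<le> n"
proof (rule ccontr)
  assume "\<not> card S \<le> n"
  hence nm: "n < card S" by simp
  define m where "m = card S"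
  obtain bs where bs: "is_basis_over K E bs" "length bs = n" and K: "is_subfield K" and EE: "is_subfield E"
    and KE: "K \<subseteq> E"
    using deg unfolding ext_degree_def by blast
  have "set bs \<subseteq> E" using bs(1) unfolding is_basis_over_def by blast
  hence bsE: "bs ! j \<in> E" if "j < n" for j using bs(2) that by auto
  obtain h where h: "bij_betw h {0..<m} S" using ex_bij_betw_nat_finite[OF fin] m_def by blast
  have hemb: "is_embedding K E (h i)" if "i < m" for i using embs h that by (auto simp: bij_betw_def)
  obtain c where c: "\<exists>i<m. c i \<noteq> 0" "\<forall>j<n. (\<Sum>i<m. h i (bs ! j) * c i) = 0"
    using homogeneous_system_solvable[OF is_subfield_UNIV, of "\<lambda>j i. h i (bs ! j)" n m] nm m_def by auto
  define C where "C \<sigma> = c (the_inv_into {0..<m} h \<sigma>)" for \<sigma>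
  have Ch: "C (h i) = c i" if "i < m" for i
    unfolding C_def using the_inv_into_f_f[OF bij_betw_imp_inj_on[OF h]] that by simp
  have "(\<Sum>\<sigma>\<in>S. C \<sigma> * \<sigma> x) = 0" if x: "x \<in> E" for x
  proof -
    obtain k where k: "\<forall>j. k j \<in> K" "x = (\<Sum>j<n. k j * bs ! j)"
      using x bs unfolding is_basis_over_def by blast
    have hx: "h i x = (\<Sum>j<n. k j * h i (bs ! j))" if "i < m" for i
      unfolding k(2) by (rule embedding_linear[OF hemb[OF that] EE KE]) (use k(1) bsE in auto)
    have "(\<Sum>\<sigma>\<in>S. C \<sigma> * \<sigma> x) = (\<Sum>i<m. c i * h i x)"
      using sum.reindex_bij_betw[OF h, of "\<lambda>\<sigma>. C \<sigma> * \<sigma> x"] Ch by (simp add: lessThan_atLeast0)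
    also have "\<dots> = (\<Sum>i<m. \<Sum>j<n. k j * (h i (bs ! j) * c i))"
      by (rule sum.cong) (auto simp: hx sum_distrib_left algebra_simps)
    also have "\<dots> = (\<Sum>j<n. k j * (\<Sum>i<m. h i (bs ! j) * c i))"
      by (subst sum.swap) (simp add: sum_distrib_left)
    also have "\<dots> = 0" using c(2) by simp
    finally show ?thesis .
  qed
  moreover have "\<forall>\<sigma>\<in>S. (\<forall>x\<in>E. \<forall>y\<in>E. \<sigma> (x * y) = \<sigma> x * \<sigma> y) \<and> \<sigma> 1 = 1"
    using embs unfolding is_embedding_def by blast
  ultimately have "\<forall>\<sigma>\<in>S. C \<sigma> = 0" using dedekind[OF EE fin _ dist] by blast
  moreover obtain i where "i < m" "c i \<noteq> 0" using c(1) by blast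
  ultimately show False using Ch h by (auto simp: bij_betw_def)
qed

section \<open>Automorphism groups\<close>

text \<open>Automorphisms in the sense of the definition act as the identity outside
  L; hence they are bijections of the whole ambient field and form a group under
  composition.\<close>
lemma Aut_D:
  assumes "\<sigma> \<in> Aut K L"
  shows "bij_betw \<sigma> L L" "\<And>x y. x \<in> L \<Longrightarrow> y \<in> L \<Longrightarrow> \<sigma> (x + y) = \<sigma> x + \<sigma> y"
    "\<And>x y. x \<in> L \<Longrightarrow> y \<in> L \<Longrightarrow> \<sigma> (x * y) = \<sigma> x * \<sigma> y"
    "\<And>x. x \<in> K \<Longrightarrow> \<sigma> x = x" "\<And>x. x \<notin> L \<Longrightarrow> \<sigma> x = x"
  using assms unfolding Aut_def by auto

lemma Aut_in: "\<sigma> \<in> Aut K L \<Longrightarrow> x \<in> L \<Longrightarrow> \<sigma> x \<in> L"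
  using Aut_D(1) by (metis bij_betwE)

lemma Aut_inj: assumes "\<sigma> \<in> Aut K L" shows "inj \<sigma>"
proof (rule injI)
  fix x y assume e: "\<sigma> x = \<sigma> y"
  show "x = y"
  proof (cases "x \<in> L"; cases "y \<in> L")
    assume "x \<in> L" "y \<in> L" then show ?thesis using e Aut_D(1)[OF assms] by (metis bij_betw_iff_bijections)
  next
    assume "x \<in> L" "y \<notin> L" then show ?thesis using e Aut_D(5)[OF assms] Aut_in[OF assms] by metis
  next
    assume "x \<notin> L" "y \<in> L" then show ?thesis using e Aut_D(5)[OF assms] Aut_in[OF assms] by metis
  next
    assume "x \<notin> L" "y \<notin> L" then show ?thesis using e Aut_D(5)[OF assms] by metis
  qed
qed

lemma Aut_bij: assumes "\<sigma> \<in> Aut K L" shows "bij \<sigma>"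
proof -
  have "surj \<sigma>"
  proof -
    have "y \<in> range \<sigma>" for y
    proof (cases "y \<in> L")
      case True then show ?thesis using Aut_D(1)[OF assms] by (metis bij_betw_def image_iff rangeI)
    next
      case False then show ?thesis using Aut_D(5)[OF assms] by (metis rangeI)
    qed
    then show ?thesis by blast
  qed
  then show ?thesis using Aut_inj[OF assms] by (simp add: bij_def)
qed

lemma Aut_one: assumes "\<sigma> \<in> Aut K L" "is_subfield L" shows "\<sigma> 1 = 1"
proof -
  have L1: "1 \<in> L" "0 \<in> L" using is_subfieldD[OF assms(2)] by auto
  have "\<sigma> 0 + \<sigma> 0 = \<sigma> 0 + 0" using Aut_D(2)[OF assms(1) L1(2) L1(2)] by simp
  hence z: "\<sigma> 0 = 0" by (rule add_left_imp_eq)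
  have "\<sigma> 1 * \<sigma> 1 = \<sigma> 1 * 1" using Aut_D(3)[OF assms(1) L1(1) L1(1)] by simp
  moreover have "\<sigma> 1 \<noteq> 0" using z Aut_inj[OF assms(1)] by (metis injD zero_neq_one)
  ultimately show ?thesis by simp
qed

lemma Aut_embedding: assumes "\<sigma> \<in> Aut K L" "is_subfield L" shows "is_embedding K L \<sigma>"
  unfolding is_embedding_def using Aut_D[OF assms(1)] Aut_one[OF assms] by auto


lemma id_Aut: "id \<in> Aut K L"
  unfolding Aut_def by auto

lemma Aut_comp: assumes "\<sigma> \<in> Aut K L" "\<tau> \<in> Aut K L" shows "\<sigma> \<circ> \<tau> \<in> Aut K L"
proof -
  have "bij_betw (\<sigma> \<circ> \<tau>) L L" using Aut_D(1)[OF assms(1)] Aut_D(1)[OF assms(2)] by (rule bij_betw_trans[rotated])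
  then show ?thesis
    unfolding Aut_def using Aut_D[OF assms(1)] Aut_D[OF assms(2)] Aut_in[OF assms(2)] by auto
qed

lemma Aut_inv: assumes "\<sigma> \<in> Aut K L"
  shows "inv_into UNIV \<sigma> \<in> Aut K L" "\<sigma> \<circ> inv_into UNIV \<sigma> = id" "inv_into UNIV \<sigma> \<circ> \<sigma> = id"
proof -
  have b: "bij \<sigma>" by (rule Aut_bij[OF assms])
  show i1: "\<sigma> \<circ> inv_into UNIV \<sigma> = id" "inv_into UNIV \<sigma> \<circ> \<sigma> = id"
    using surj_iff[THEN iffD1, OF bij_is_surj[OF b]] inj_iff[THEN iffD1, OF bij_is_inj[OF b]] by auto
  have ii: "inv_into UNIV \<sigma> (\<sigma> x) = x" "\<sigma> (inv_into UNIV \<sigma> x) = x" for x using i1 by (metis comp_apply id_apply)+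
  have inL: "inv_into UNIV \<sigma> y \<in> L \<longleftrightarrow> y \<in> L" for y
    by (metis Aut_D(5)[OF assms] Aut_in[OF assms] ii(2))
  have "bij_betw (inv_into UNIV \<sigma>) L L"
    by (rule bij_betw_byWitness[of _ \<sigma>]) (use ii inL Aut_in[OF assms] in auto)
  moreover have "inv_into UNIV \<sigma> (x + y) = inv_into UNIV \<sigma> x + inv_into UNIV \<sigma> y" if "x \<in> L" "y \<in> L" for x y
  proof -
    have "\<sigma> (inv_into UNIV \<sigma> x + inv_into UNIV \<sigma> y) = x + y" using Aut_D(2)[OF assms] inL that ii by simp
    then show ?thesis by (metis ii(1))
  qed
  moreover have "inv_into UNIV \<sigma> (x * y) = inv_into UNIV \<sigma> x * inv_into UNIV \<sigma> y" if "x \<in> L" "y \<in> L" for x y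
  proof -
    have "\<sigma> (inv_into UNIV \<sigma> x * inv_into UNIV \<sigma> y) = x * y" using Aut_D(3)[OF assms] inL that ii by simp
    then show ?thesis by (metis ii(1))
  qed
  moreover have "inv_into UNIV \<sigma> x = x" if "x \<in> K" for x using Aut_D(4)[OF assms that] by (metis ii(1))
  moreover have "inv_into UNIV \<sigma> x = x" if "x \<notin> L" for x using Aut_D(5)[OF assms that] by (metis ii(1))
  ultimately show "inv_into UNIV \<sigma> \<in> Aut K L" unfolding Aut_def by auto
qed

lemma Aut_mono: "K \<subseteq> K' \<Longrightarrow> Aut K' L \<subseteq> Aut K L"
  unfolding Aut_def by auto

lemma Aut_eqI: assumes "\<sigma> \<in> Aut K L" "\<tau> \<in> Aut K L" "\<forall>x\<in>L. \<sigma> x = \<tau> x" shows "\<sigma> = \<tau>"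
proof (rule ext)
  fix x show "\<sigma> x = \<tau> x"
    by (cases "x \<in> L") (use assms Aut_D(5)[OF assms(1)] Aut_D(5)[OF assms(2)] in auto)
qed

lemma Aut_finite:
  assumes "ext_degree K L n"
  shows "finite (Aut K L)" "card (Aut K L) \<le> n"
proof -
  have L: "is_subfield L" using assms unfolding ext_degree_def by blast
  have bnd: "card S \<le> n" if "S \<subseteq> Aut K L" "finite S" for S
  proof (rule embedding_count[OF assms that(2)])
    show "\<forall>\<sigma>\<in>S. is_embedding K L \<sigma>" using that Aut_embedding[OF _ L] by blast
    show "\<forall>\<sigma>\<in>S. \<forall>\<tau>\<in>S. \<sigma> \<noteq> \<tau> \<longrightarrow> (\<exists>x\<in>L. \<sigma> x \<noteq> \<tau> x)"
      using that Aut_eqI by blast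
  qed
  show f: "finite (Aut K L)"
  proof (rule ccontr)
    assume "infinite (Aut K L)"
    then obtain S where "S \<subseteq> Aut K L" "finite S" "card S = Suc n"
      using infinite_arbitrarily_large by blast
    then show False using bnd[of S] by simp
  qed
  show "card (Aut K L) \<le> n" using bnd[OF _ f] by simp
qed

lemma group_Gal: "group (Gal K L)"
proof (rule groupI)
  show "\<And>x y. x \<in> carrier (Gal K L) \<Longrightarrow> y \<in> carrier (Gal K L) \<Longrightarrow> x \<otimes>\<^bsub>Gal K L\<^esub> y \<in> carrier (Gal K L)"
    unfolding Gal_def using Aut_comp by auto
  show "\<one>\<^bsub>Gal K L\<^esub> \<in> carrier (Gal K L)" unfolding Gal_def using id_Aut by auto
  show "\<And>x y z. x \<in> carrier (Gal K L) \<Longrightarrow> y \<in> carrier (Gal K L) \<Longrightarrow> z \<in> carrier (Gal K L) \<Longrightarrow>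
      x \<otimes>\<^bsub>Gal K L\<^esub> y \<otimes>\<^bsub>Gal K L\<^esub> z = x \<otimes>\<^bsub>Gal K L\<^esub> (y \<otimes>\<^bsub>Gal K L\<^esub> z)"
    unfolding Gal_def by (simp add: comp_assoc)
  show "\<And>x. x \<in> carrier (Gal K L) \<Longrightarrow> \<one>\<^bsub>Gal K L\<^esub> \<otimes>\<^bsub>Gal K L\<^esub> x = x"
    unfolding Gal_def by simp
  show "\<And>x. x \<in> carrier (Gal K L) \<Longrightarrow> \<exists>y\<in>carrier (Gal K L). y \<otimes>\<^bsub>Gal K L\<^esub> x = \<one>\<^bsub>Gal K L\<^esub>"
  proof -
    fix x assume "x \<in> carrier (Gal K L)"
    hence x: "x \<in> Aut K L" unfolding Gal_def by simp
    show "\<exists>y\<in>carrier (Gal K L). y \<otimes>\<^bsub>Gal K L\<^esub> x = \<one>\<^bsub>Gal K L\<^esub>"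
      unfolding Gal_def using Aut_inv(1,3)[OF x] by (intro bexI[of _ "inv_into UNIV x"]) simp_all
  qed
qed

lemma Gal_simps [simp]: "carrier (Gal K L) = Aut K L" "monoid.mult (Gal K L) = (\<circ>)" "one (Gal K L) = id"
  unfolding Gal_def by simp_all

lemma Gal_pow: "\<sigma> [^]\<^bsub>Gal K L\<^esub> (n::nat) = \<sigma> ^^ n"
  by (induction n) (simp_all add: fun_eq_iff funpow_swap1)

lemma Gal_inv: assumes "\<sigma> \<in> Aut K L" shows "inv\<^bsub>Gal K L\<^esub> \<sigma> = inv_into UNIV \<sigma>"
proof -
  interpret group "Gal K L" by (rule group_Gal)
  show ?thesis by (rule inv_equality) (use Aut_inv[OF assms] assms in simp_all)
qed

lemma subgroup_Aut: assumes "F \<subseteq> K" shows "subgroup (Aut K L) (Gal F L)"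
proof (rule subgroup.intro)
  show "Aut K L \<subseteq> carrier (Gal F L)" using Aut_mono[OF assms] by simp
  show "\<And>x y. x \<in> Aut K L \<Longrightarrow> y \<in> Aut K L \<Longrightarrow> x \<otimes>\<^bsub>Gal F L\<^esub> y \<in> Aut K L"
    using Aut_comp by simp
  show "\<one>\<^bsub>Gal F L\<^esub> \<in> Aut K L" using id_Aut by simp
  fix x assume x: "x \<in> Aut K L"
  have "x \<in> Aut F L" using x Aut_mono[OF assms] by blast
  then show "inv\<^bsub>Gal F L\<^esub> x \<in> Aut K L" using Gal_inv[of x F L] Aut_inv(1)[OF x] by simp
qed
section \<open>Artin's bound for fixed fields\<close>

lemma left_translation_surj:
  assumes HA: "H \<subseteq> Aut K L" and fin: "finite H" and comp: "\<forall>g\<in>H. \<forall>h\<in>H. g \<circ> h \<in> H"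
    and \<sigma>: "\<sigma> \<in> H" and h: "h \<in> H"
  shows "\<exists>\<tau>\<in>H. \<sigma> \<circ> \<tau> = h"
proof -
  have inj: "inj_on (\<lambda>\<tau>. \<sigma> \<circ> \<tau>) H"
    using Aut_inj[of \<sigma> K L] HA \<sigma> by (auto simp: inj_on_def fun_eq_iff inj_def)
  have sub: "(\<lambda>\<tau>. \<sigma> \<circ> \<tau>) ` H \<subseteq> H" using comp \<sigma> by auto
  have "(\<lambda>\<tau>. \<sigma> \<circ> \<tau>) ` H = H"
    by (rule card_subset_eq[OF fin sub]) (simp add: card_image[OF inj])
  then show ?thesis using h by (metis imageE)
qed

definition artin_solution ::
    "'a::field set \<Rightarrow> ('a \<Rightarrow> 'a) set \<Rightarrow> nat \<Rightarrow> (nat \<Rightarrow> 'a) \<Rightarrow> (nat \<Rightarrow> 'a) \<Rightarrow> bool" where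
  "artin_solution L H m x c \<longleftrightarrow> (\<forall>i. c i \<in> L) \<and> (\<forall>h\<in>H. (\<Sum>i<m. h (x i) * c i) = 0)"

definition support_size :: "nat \<Rightarrow> (nat \<Rightarrow> 'a::zero) \<Rightarrow> nat" where
  "support_size m c = card {i. i < m \<and> c i \<noteq> 0}"

lemma artin_solution_exists:
  assumes L: "is_subfield L" and HA: "H \<subseteq> Aut K L" and fin: "finite H"
    and xL: "\<forall>i<m. x i \<in> L" and m: "card H < m"
  shows "\<exists>c. artin_solution L H m x c \<and> (\<exists>i<m. c i \<noteq> 0)"
proof -
  obtain g where g: "bij_betw g {0..<card H} H" using ex_bij_betw_nat_finite[OF fin] by blast
  have hL: "h y \<in> L" if "h \<in> H" "y \<in> L" for h y using Aut_in HA that by blast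
  have gH: "g j \<in> H" if "j < card H" for j using g that by (auto simp: bij_betw_def)
  define a where "a j i = (if j < card H \<and> i < m then g j (x i) else 0)" for j i
  have "\<forall>j i. a j i \<in> L"
    unfolding a_def using gH xL hL is_subfieldD(1)[OF L] by auto
  then obtain c where c: "\<forall>i. c i \<in> L" "\<exists>i<m. c i \<noteq> 0" "\<forall>j<card H. (\<Sum>i<m. a j i * c i) = 0"
    using homogeneous_system_solvable[OF L _ m] by blast
  have "(\<Sum>i<m. h (x i) * c i) = 0" if h: "h \<in> H" for h
  proof -
    have "h \<in> g ` {0..<card H}" using g h by (simp add: bij_betw_def)
    then obtain j where j: "j < card H" "h = g j" by auto
    have "(\<Sum>i<m. h (x i) * c i) = (\<Sum>i<m. a j i * c i)"
      by (rule sum.cong) (auto simp: a_def j)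
    then show ?thesis using c(3) j by simp
  qed
  then show ?thesis using c unfolding artin_solution_def by blast
qed

lemma artin_solution_scale:
  assumes L: "is_subfield L" and c: "artin_solution L H m x c" and a: "a \<in> L"
  shows "artin_solution L H m x (\<lambda>i. c i * a)"
proof -
  have "(\<Sum>i<m. h (x i) * (c i * a)) = (\<Sum>i<m. h (x i) * c i) * a" for h
    by (simp add: sum_distrib_right mult.assoc)
  then show ?thesis using c is_subfieldD(4)[OF L _ a] unfolding artin_solution_def by simp
qed

lemma artin_solution_diff:
  assumes L: "is_subfield L" and c: "artin_solution L H m x c" and d: "artin_solution L H m x d"
  shows "artin_solution L H m x (\<lambda>i. c i - d i)"
  using c d is_subfield_diff[OF L]
  unfolding artin_solution_def by (simp add: right_diff_distrib sum_subtractf)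

lemma artin_solution_apply:
  assumes L: "is_subfield L" and HA: "H \<subseteq> Aut K L" and fin: "finite H"
    and comp: "\<forall>g\<in>H. \<forall>h\<in>H. g \<circ> h \<in> H" and \<sigma>: "\<sigma> \<in> H"
    and xL: "\<forall>i<m. x i \<in> L" and c: "artin_solution L H m x c"
  shows "artin_solution L H m x (\<lambda>i. \<sigma> (c i))"
proof -
  have e: "is_embedding K L \<sigma>" using Aut_embedding[OF _ L] HA \<sigma> by blast
  have hL: "h y \<in> L" if "h \<in> H" "y \<in> L" for h y using Aut_in HA that by blast
  have cL: "\<forall>i. c i \<in> L" using c unfolding artin_solution_def by blast
  have "(\<Sum>i<m. h (x i) * \<sigma> (c i)) = 0" if h: "h \<in> H" for h
  proof -
    obtain \<tau> where \<tau>: "\<tau> \<in> H" "\<sigma> \<circ> \<tau> = h" using left_translation_surj[OF HA fin comp \<sigma> h] by blast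
    have "(\<Sum>i<m. h (x i) * \<sigma> (c i)) = (\<Sum>i<m. \<sigma> (\<tau> (x i) * c i))"
    proof (rule sum.cong)
      fix i assume i: "i \<in> {..<m}"
      have "\<sigma> (\<tau> (x i) * c i) = \<sigma> (\<tau> (x i)) * \<sigma> (c i)"
        using embedding_mult[OF e] hL[OF \<tau>(1)] xL i cL by simp
      then show "h (x i) * \<sigma> (c i) = \<sigma> (\<tau> (x i) * c i)" using \<tau>(2) by auto
    qed simp
    also have "\<dots> = \<sigma> (\<Sum>i<m. \<tau> (x i) * c i)"
      by (rule embedding_sum[OF e L, symmetric]) (use hL[OF \<tau>(1)] xL cL is_subfieldD(4)[OF L] in auto)
    also have "(\<Sum>i<m. \<tau> (x i) * c i) = 0" using c \<tau>(1) unfolding artin_solution_def by blast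
    finally show ?thesis using embedding_zero[OF e] is_subfieldD(1)[OF L] by simp
  qed
  then show ?thesis using cL hL[OF \<sigma>] unfolding artin_solution_def by blast
qed

text \<open>A nontrivial solution of minimal support, normalised to have an entry 1, is fixed
  by H: otherwise \<sigma>(c) - c would be a nontrivial solution of smaller support.\<close>
lemma artin_minimal_solution_fixed:
  assumes L: "is_subfield L" and HA: "H \<subseteq> Aut K L" and fin: "finite H"
    and comp: "\<forall>g\<in>H. \<forall>h\<in>H. g \<circ> h \<in> H" and xL: "\<forall>i<m. x i \<in> L"
    and c: "artin_solution L H m x c" and k: "k < m" "c k = 1"
    and minimal: "\<And>d. artin_solution L H m x d \<Longrightarrow> \<exists>i<m. d i \<noteq> 0 \<Longrightarrow>
      support_size m c \<le> support_size m d"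
    and \<sigma>: "\<sigma> \<in> H" and i: "i < m"
  shows "\<sigma> (c i) = c i"
proof (rule ccontr)
  assume ne: "\<sigma> (c i) \<noteq> c i"
  have e: "is_embedding K L \<sigma>" using Aut_embedding[OF _ L] HA \<sigma> by blast
  define d where "d j = \<sigma> (c j) - c j" for j
  have d: "artin_solution L H m x d"
    unfolding d_def by (rule artin_solution_diff[OF L artin_solution_apply[OF L HA fin comp \<sigma> xL c] c])
  have "d j = 0" if "c j = 0" for j
    unfolding d_def using that embedding_zero[OF e] is_subfieldD(1)[OF L] by simp
  moreover have "d k = 0" unfolding d_def using embedding_one[OF e] k(2) by simp
  ultimately have sub: "{j. j < m \<and> d j \<noteq> 0} \<subseteq> {j. j < m \<and> c j \<noteq> 0} - {k}" by blast
  have "support_size m d \<le> card ({j. j < m \<and> c j \<noteq> 0} - {k})"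
    unfolding support_size_def by (rule card_mono[OF _ sub]) simp
  also have "\<dots> < support_size m c"
    unfolding support_size_def by (rule card_Diff1_less) (use k in auto)
  finally have "support_size m d < support_size m c" .
  moreover have "\<exists>j<m. d j \<noteq> 0" using ne i unfolding d_def by auto
  ultimately show False using minimal[OF d] by simp
qed

lemma artin_dependence:
  assumes L: "is_subfield L" and HA: "H \<subseteq> Aut K L" and fin: "finite H" and idH: "id \<in> H"
    and comp: "\<forall>g\<in>H. \<forall>h\<in>H. g \<circ> h \<in> H"
    and xL: "\<forall>i<m. x i \<in> L" and m: "card H < m"
  shows "\<exists>c. (\<forall>i. c i \<in> fixed_field L H) \<and> (\<exists>i<m. c i \<noteq> 0) \<and> (\<Sum>i<m. c i * x i) = 0"
proof -
  let ?nontrivial = "\<lambda>c. artin_solution L H m x c \<and> (\<exists>i<m. c i \<noteq> 0)"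
  obtain c0 where "?nontrivial c0" using artin_solution_exists[OF L HA fin xL m] by blast
  then obtain c where c: "?nontrivial c" and cmin: "\<forall>d. ?nontrivial d \<longrightarrow> support_size m c \<le> support_size m d"
    using ex_has_least_nat[of ?nontrivial c0 "support_size m"] by blast
  then obtain k where k: "k < m" "c k \<noteq> 0" by blast
  have ckL: "inverse (c k) \<in> L" using c k is_subfieldD(6)[OF L] unfolding artin_solution_def by blast
  define c' where "c' i = c i * inverse (c k)" for i
  have c': "artin_solution L H m x c'" unfolding c'_def by (rule artin_solution_scale[OF L _ ckL]) (use c in blast)
  have c'k: "c' k = 1" unfolding c'_def using k by simp
  have "support_size m c' = support_size m c"
    unfolding support_size_def c'_def using k by simp
  then have fixed: "\<sigma> (c' i) = c' i" if "\<sigma> \<in> H" "i < m" for \<sigma> i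
    using artin_minimal_solution_fixed[OF L HA fin comp xL c' k(1) c'k _ that] cmin by simp
  define c'' where "c'' i = (if i < m then c' i else 0)" for i
  have "\<forall>i. c'' i \<in> fixed_field L H"
    unfolding c''_def fixed_field_def using c' fixed is_subfieldD(1)[OF L]
      embedding_zero[OF Aut_embedding[OF _ L]] HA unfolding artin_solution_def by auto
  moreover have "\<exists>i<m. c'' i \<noteq> 0" using k c'k unfolding c''_def by (intro exI[of _ k]) simp
  moreover have "(\<Sum>i<m. c'' i * x i) = 0"
  proof -
    have "(\<Sum>i<m. id (x i) * c' i) = 0" using c' idH unfolding artin_solution_def by blast
    then show ?thesis unfolding c''_def by (simp add: mult.commute)
  qed
  ultimately show ?thesis by blast
qed

lemma artin_bound:
  assumes L: "is_subfield L" and HA: "H \<subseteq> Aut K L" and fin: "finite H" and idH: "id \<in> H"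
    and comp: "\<forall>g\<in>H. \<forall>h\<in>H. g \<circ> h \<in> H"
    and deg: "ext_degree (fixed_field L H) L n"
  shows "n \<le> card H"
proof (rule ccontr)
  assume "\<not> n \<le> card H"
  hence nH: "card H < n" by simp
  obtain bs where bs: "is_basis_over (fixed_field L H) L bs" "length bs = n"
    using deg unfolding ext_degree_def by blast
  have "set bs \<subseteq> L" using bs(1) unfolding is_basis_over_def by blast
  hence xL: "\<forall>i<n. bs ! i \<in> L" using bs(2) by auto
  obtain c where c: "\<forall>i. c i \<in> fixed_field L H" "\<exists>i<n. c i \<noteq> 0" "(\<Sum>i<n. c i * bs ! i) = 0"
    using artin_dependence[OF L HA fin idH comp xL nH] by blast
  have "\<forall>i<length bs. c i = 0" using bs(1) c(1,3) bs(2) unfolding is_basis_over_def by blast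
  then show False using c(2) bs(2) by auto
qed

section \<open>Restriction to intermediate fields and Galois subextensions\<close>

lemma fiber_count:
  assumes fin: "finite G" and fib: "\<And>\<sigma>. \<sigma> \<in> G \<Longrightarrow> card {\<tau>\<in>G. f \<tau> = f \<sigma>} \<le> a"
  shows "card G \<le> card (f ` G) * a"
proof -
  have "G = (\<Union>r\<in>f ` G. {\<tau>\<in>G. f \<tau> = r})" by auto
  moreover have "card (\<Union>r\<in>f ` G. {\<tau>\<in>G. f \<tau> = r}) \<le> (\<Sum>r\<in>f ` G. card {\<tau>\<in>G. f \<tau> = r})"
    by (rule card_UN_le) (simp add: fin)
  ultimately have "card G \<le> (\<Sum>r\<in>f ` G. card {\<tau>\<in>G. f \<tau> = r})" by simp
  also have "\<dots> \<le> (\<Sum>r\<in>f ` G. a)"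
    by (rule sum_mono) (use fib in auto)
  finally show ?thesis by simp
qed

text \<open>Restriction of a map to K (identity outside K), matching the convention of Aut.\<close>
definition restr :: "'a set \<Rightarrow> ('a \<Rightarrow> 'a) \<Rightarrow> 'a \<Rightarrow> 'a" where
  "restr K \<sigma> = (\<lambda>x. if x \<in> K then \<sigma> x else x)"

lemma restr_eq_iff: "restr K \<sigma> = restr K \<tau> \<longleftrightarrow> (\<forall>x\<in>K. \<sigma> x = \<tau> x)"
proof
  assume e: "restr K \<sigma> = restr K \<tau>"
  show "\<forall>x\<in>K. \<sigma> x = \<tau> x"
  proof
    fix x assume "x \<in> K" then show "\<sigma> x = \<tau> x" using fun_cong[OF e, of x] unfolding restr_def by simp
  qed
next
  assume "\<forall>x\<in>K. \<sigma> x = \<tau> x" then show "restr K \<sigma> = restr K \<tau>" unfolding restr_def by (auto simp: fun_eq_iff)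
qed

lemma embedding_restrict:
  assumes e: "is_embedding F L \<sigma>" and K: "is_subfield K" "F \<subseteq> K" "K \<subseteq> L"
  shows "is_embedding F K (restr K \<sigma>)"
  unfolding is_embedding_def
proof (intro conjI ballI)
  fix x y assume xy: "x \<in> K" "y \<in> K"
  then have "x \<in> L" "y \<in> L" "x + y \<in> K" "x * y \<in> K" using K is_subfieldD[OF K(1)] by auto
  then show "restr K \<sigma> (x + y) = restr K \<sigma> x + restr K \<sigma> y" "restr K \<sigma> (x * y) = restr K \<sigma> x * restr K \<sigma> y"
    unfolding restr_def using xy embedding_add[OF e] embedding_mult[OF e] by simp_all
next
  show "restr K \<sigma> 1 = 1" unfolding restr_def using embedding_one[OF e] by simp
next
  fix x assume "x \<in> F" then show "restr K \<sigma> x = x" unfolding restr_def using embedding_fix[OF e] by simp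
qed

lemma restrict_fiber:
  assumes "\<sigma> \<in> Aut F L" "is_subfield K" "F \<subseteq> K" "K \<subseteq> L"
  shows "{\<tau> \<in> Aut F L. restr K \<tau> = restr K \<sigma>} \<subseteq> (\<lambda>\<kappa>. \<sigma> \<circ> \<kappa>) ` Aut K L"
proof
  fix \<tau> assume \<tau>: "\<tau> \<in> {\<tau> \<in> Aut F L. restr K \<tau> = restr K \<sigma>}"
  define \<kappa> where "\<kappa> = inv_into UNIV \<sigma> \<circ> \<tau>"
  have k1: "\<kappa> \<in> Aut F L" unfolding \<kappa>_def using Aut_comp Aut_inv(1) assms(1) \<tau> by blast
  have "\<kappa> x = x" if "x \<in> K" for x
  proof -
    have "\<tau> x = \<sigma> x" using \<tau> that unfolding restr_eq_iff by auto
    then show ?thesis unfolding \<kappa>_def using inv_into_f_f[OF Aut_inj[OF assms(1)]] by simp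
  qed
  hence "\<kappa> \<in> Aut K L" using k1 unfolding Aut_def by auto
  moreover have "\<sigma> \<circ> \<kappa> = \<tau>" unfolding \<kappa>_def by (simp add: comp_assoc[symmetric] Aut_inv(2)[OF assms(1)])
  ultimately show "\<tau> \<in> (\<lambda>\<kappa>. \<sigma> \<circ> \<kappa>) ` Aut K L" by blast
qed

lemma card_Aut_le_restrictions:
  assumes fin: "finite (Aut F L)" "finite (Aut K L)" and K: "is_subfield K" "F \<subseteq> K" "K \<subseteq> L"
  shows "card (Aut F L) \<le> card (restr K ` Aut F L) * card (Aut K L)"
proof (rule fiber_count[OF fin(1)])
  fix \<sigma> assume \<sigma>: "\<sigma> \<in> Aut F L"
  have "card {\<tau> \<in> Aut F L. restr K \<tau> = restr K \<sigma>} \<le> card ((\<lambda>\<kappa>. \<sigma> \<circ> \<kappa>) ` Aut K L)"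
    by (rule card_mono[OF finite_imageI[OF fin(2)] restrict_fiber[OF \<sigma> K]])
  also have "\<dots> \<le> card (Aut K L)" by (rule card_image_le[OF fin(2)])
  finally show "card {\<tau> \<in> Aut F L. restr K \<tau> = restr K \<sigma>} \<le> card (Aut K L)" .
qed

text \<open>The restrictions of F-automorphisms of L to K are distinct F-embeddings of K,
  so there are at most [K:F] of them.\<close>
lemma card_restrictions_le:
  assumes "ext_degree F K m" "finite (Aut F L)" "is_subfield L" "is_subfield K" "F \<subseteq> K" "K \<subseteq> L"
  shows "card (restr K ` Aut F L) \<le> m"
proof (rule embedding_count[OF assms(1) finite_imageI[OF assms(2)]])
  show "\<forall>\<sigma>\<in>restr K ` Aut F L. is_embedding F K \<sigma>"
    using embedding_restrict[OF Aut_embedding[OF _ assms(3)] assms(4-6)] by blast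
  show "\<forall>\<sigma>\<in>restr K ` Aut F L. \<forall>\<tau>\<in>restr K ` Aut F L. \<sigma> \<noteq> \<tau> \<longrightarrow> (\<exists>x\<in>K. \<sigma> x \<noteq> \<tau> x)"
    unfolding restr_def by (auto simp: fun_eq_iff)
qed

text \<open>Both inequalities of the
  counting argument above must be equalities.\<close>
lemma galois_intermediate:
  assumes gal: "galois_ext F L" and K: "is_subfield K" "F \<subseteq> K" "K \<subseteq> L"
  obtains m k where "ext_degree F K m" "ext_degree K L k" "card (Aut K L) = k"
    "card (restr K ` Aut F L) = m"
proof -
  obtain n where n: "ext_degree F L n" "card (Aut F L) = n" using gal unfolding galois_ext_def by blast
  obtain m k where m: "ext_degree F K m" and k: "ext_degree K L k" using ext_degree_sub[OF n(1) K] by blast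
  have nmk: "m * k = n" by (rule ext_degree_tower_eq[OF n(1) m k])
  have L: "is_subfield L" using n(1) unfolding ext_degree_def by blast
  have finG: "finite (Aut F L)" using Aut_finite[OF n(1)] by blast
  have finK: "finite (Aut K L)" "card (Aut K L) \<le> k" using Aut_finite[OF k] by blast+
  have rb: "card (restr K ` Aut F L) \<le> m" by (rule card_restrictions_le[OF m finG L K])
  have le: "m * k \<le> card (restr K ` Aut F L) * card (Aut K L)"
    using card_Aut_le_restrictions[OF finG finK(1) K] n nmk by simp
  have "m * k \<le> m * card (Aut K L)" using order_trans[OF le mult_le_mono1[OF rb]] .
  hence ck: "card (Aut K L) = k" using ext_degree_pos[OF m] finK(2) by simp
  have "m * k \<le> card (restr K ` Aut F L) * k" using le ck by simp
  hence "card (restr K ` Aut F L) = m" using ext_degree_pos[OF k] rb by simp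
  note ck this
  then show ?thesis using that m k by blast
qed

lemma galois_card: "galois_ext K M \<Longrightarrow> ext_degree K M n \<Longrightarrow> card (Aut K M) = n"
  unfolding galois_ext_def using ext_degree_unique by blast

text \<open>The fixed field of a finite group H of automorphisms of a finite extension
  L|F lies between F and L and has codimension |H| (Artin's bound together with the
  bound on the number of automorphisms).\<close>
lemma fixed_field_degree:
  assumes deg: "ext_degree F L n" and HA: "H \<subseteq> Aut F L" and idH: "id \<in> H"
    and comp: "\<forall>g\<in>H. \<forall>h\<in>H. g \<circ> h \<in> H"
  shows "is_subfield (fixed_field L H)" "F \<subseteq> fixed_field L H" "fixed_field L H \<subseteq> L"
    "ext_degree (fixed_field L H) L (card H)"
proof -
  have L: "is_subfield L" and FL: "F \<subseteq> L" using deg unfolding ext_degree_def by blast+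
  have fin: "finite H" using finite_subset[OF HA Aut_finite(1)[OF deg]] .
  show Fx: "is_subfield (fixed_field L H)"
    by (rule fixed_field_subfield[OF L]) (use HA Aut_embedding[OF _ L] embedding_mono in blast)
  show FFx: "F \<subseteq> fixed_field L H" unfolding fixed_field_def using FL HA Aut_D(4) by blast
  show FxL: "fixed_field L H \<subseteq> L" unfolding fixed_field_def by blast
  obtain a b where b: "ext_degree (fixed_field L H) L b" using ext_degree_sub[OF deg Fx FFx FxL] by blast
  have "b \<le> card H" by (rule artin_bound[OF L HA fin idH comp b])
  moreover have "H \<subseteq> Aut (fixed_field L H) L"
    using HA unfolding fixed_field_def Aut_def by auto
  hence "card H \<le> b" using Aut_finite[OF b] card_mono by (metis order_trans)
  ultimately show "ext_degree (fixed_field L H) L (card H)" using b by simp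
qed

lemma fixed_field_Aut:
  assumes gal: "galois_ext F L" and K: "is_subfield K" "F \<subseteq> K" "K \<subseteq> L"
  shows "fixed_field L (Aut K L) = K"
proof -
  obtain m k where k: "ext_degree K L k" and ck: "card (Aut K L) = k"
    using galois_intermediate[OF gal K] by metis
  have Fx: "is_subfield (fixed_field L (Aut K L))" "K \<subseteq> fixed_field L (Aut K L)"
    "fixed_field L (Aut K L) \<subseteq> L" "ext_degree (fixed_field L (Aut K L)) L k"
    using fixed_field_degree[OF k subset_refl id_Aut] Aut_comp ck by blast+
  obtain a b where a: "ext_degree K (fixed_field L (Aut K L)) a"
    using ext_degree_sub[OF k Fx(1-3)] by blast
  have "a * k = k" by (rule ext_degree_tower_eq[OF k a Fx(4)])
  then have "a = 1" using ext_degree_pos[OF k] by simp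
  then show ?thesis using ext_degree_one a by blast
qed

text \<open>Every F-embedding of an intermediate field K of a Galois extension M|F extends to
  an F-automorphism of M: otherwise there would be [K:F] + 1 distinct F-embeddings of K.\<close>
lemma embedding_extends:
  assumes gal: "galois_ext F M" and K: "is_subfield K" "F \<subseteq> K" "K \<subseteq> M" and e: "is_embedding F K \<sigma>"
  shows "\<exists>\<tau>\<in>Aut F M. \<forall>x\<in>K. \<sigma> x = \<tau> x"
proof (rule ccontr)
  assume nex: "\<not> (\<exists>\<tau>\<in>Aut F M. \<forall>x\<in>K. \<sigma> x = \<tau> x)"
  obtain m where m: "ext_degree F K m" and cm: "card ((restr K) ` Aut F M) = m"
    using galois_intermediate[OF gal K] by metis
  obtain n where n: "ext_degree F M n" using gal unfolding galois_ext_def by blast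
  have M: "is_subfield M" using n unfolding ext_degree_def by blast
  have finG: "finite (Aut F M)" using Aut_finite[OF n] by blast
  define S where "S = insert (restr K \<sigma>) ((restr K) ` Aut F M)"
  have notin: "restr K \<sigma> \<notin> (restr K) ` Aut F M"
  proof
    assume "restr K \<sigma> \<in> (restr K) ` Aut F M"
    then obtain \<tau> where "\<tau> \<in> Aut F M" "restr K \<sigma> = restr K \<tau>" by blast
    then show False using nex restr_eq_iff by metis
  qed
  have "card S \<le> m"
  proof (rule embedding_count[OF m])
    show "finite S" unfolding S_def using finG by simp
    show "\<forall>\<sigma>\<in>S. is_embedding F K \<sigma>"
      unfolding S_def using embedding_restrict[OF Aut_embedding[OF _ M] K] embedding_restrict[OF e K(1,2) subset_refl] by blast
    show "\<forall>\<sigma>\<in>S. \<forall>\<tau>\<in>S. \<sigma> \<noteq> \<tau> \<longrightarrow> (\<exists>x\<in>K. \<sigma> x \<noteq> \<tau> x)"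
      unfolding S_def restr_def by (auto simp: fun_eq_iff)
  qed
  moreover have "card S = Suc m" unfolding S_def using notin cm finG by simp
  ultimately show False by simp
qed

lemma Aut_maps_galois_subfield:
  assumes galL: "galois_ext F L" and galM: "galois_ext F M" and \<sigma>: "\<sigma> \<in> Aut F L"
    and x: "x \<in> M" "x \<in> L"
  shows "\<sigma> x \<in> M"
proof -
  obtain n where "ext_degree F M n" using galM unfolding galois_ext_def by blast
  then have M: "is_subfield M" "F \<subseteq> M" unfolding ext_degree_def by blast+
  obtain n' where "ext_degree F L n'" using galL unfolding galois_ext_def by blast
  then have L: "is_subfield L" "F \<subseteq> L" unfolding ext_degree_def by blast+
  have K: "is_subfield (M \<inter> L)" using is_subfield_Inter[of "{M, L}"] M L by simp
  have "is_embedding F (M \<inter> L) \<sigma>" using embedding_mono[OF Aut_embedding[OF \<sigma> L(1)]] by blast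
  then obtain \<tau> where \<tau>: "\<tau> \<in> Aut F M" "\<forall>y\<in>M \<inter> L. \<sigma> y = \<tau> y"
    using embedding_extends[OF galM K] M L by blast
  then show ?thesis using x Aut_in[OF \<tau>(1)] by auto
qed

lemma restr_Aut:
  assumes \<sigma>: "\<sigma> \<in> Aut F L" and K: "is_subfield K" "F \<subseteq> K" "K \<subseteq> L"
    and stab: "\<forall>\<sigma>\<in>Aut F L. \<forall>x\<in>K. \<sigma> x \<in> K"
  shows "restr K \<sigma> \<in> Aut F K"
proof -
  have inj: "inj \<sigma>" by (rule Aut_inj[OF \<sigma>])
  have iv: "inv_into UNIV \<sigma> \<in> Aut F L" by (rule Aut_inv(1)[OF \<sigma>])
  have "bij_betw (restr K \<sigma>) K K"
    unfolding bij_betw_def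
  proof
    show "inj_on (restr K \<sigma>) K" unfolding restr_def using inj by (auto simp: inj_on_def inj_def)
    show "restr K \<sigma> ` K = K"
    proof (intro equalityI subsetI)
      fix y assume "y \<in> restr K \<sigma> ` K" then show "y \<in> K" unfolding restr_def using stab \<sigma> by auto
    next
      fix y assume y: "y \<in> K"
      have "inv_into UNIV \<sigma> y \<in> K" using stab iv y by blast
      moreover have "\<sigma> (inv_into UNIV \<sigma> y) = y" using Aut_inv(2)[OF \<sigma>] by (simp add: pointfree_idE)
      ultimately show "y \<in> restr K \<sigma> ` K" unfolding restr_def by (intro image_eqI[of _ _ "inv_into UNIV \<sigma> y"]) simp_all
    qed
  qed
  moreover have "\<forall>x\<in>K. \<forall>y\<in>K. restr K \<sigma> (x + y) = restr K \<sigma> x + restr K \<sigma> y \<and> restr K \<sigma> (x * y) = restr K \<sigma> x * restr K \<sigma> y"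
  proof (intro ballI conjI)
    fix x y assume xy: "x \<in> K" "y \<in> K"
    then have "x \<in> L" "y \<in> L" "x + y \<in> K" "x * y \<in> K" using K is_subfieldD[OF K(1)] by auto
    then show "restr K \<sigma> (x + y) = restr K \<sigma> x + restr K \<sigma> y" "restr K \<sigma> (x * y) = restr K \<sigma> x * restr K \<sigma> y"
      unfolding restr_def using xy Aut_D(2,3)[OF \<sigma>] by simp_all
  qed
  moreover have "\<forall>x\<in>F. restr K \<sigma> x = x" unfolding restr_def using Aut_D(4)[OF \<sigma>] by simp
  moreover have "\<forall>x. x \<notin> K \<longrightarrow> restr K \<sigma> x = x" unfolding restr_def by simp
  ultimately show ?thesis unfolding Aut_def by blast
qed

lemma stable_galois:
  assumes gal: "galois_ext F L" and K: "is_subfield K" "F \<subseteq> K" "K \<subseteq> L"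
    and stab: "\<forall>\<sigma>\<in>Aut F L. \<forall>x\<in>K. \<sigma> x \<in> K"
  shows "galois_ext F K" "restr K ` Aut F L = Aut F K"
proof -
  obtain m where m: "ext_degree F K m" and cm: "card ((restr K) ` Aut F L) = m"
    using galois_intermediate[OF gal K] by metis
  have sub: "restr K ` Aut F L \<subseteq> Aut F K" using restr_Aut[OF _ K stab] by blast
  have fin: "finite (Aut F K)" "card (Aut F K) \<le> m" using Aut_finite[OF m] by blast+
  show eq: "restr K ` Aut F L = Aut F K"
    by (rule card_subset_eq[OF fin(1) sub]) (use cm fin card_mono[OF fin(1) sub] in simp)
  show "galois_ext F K" unfolding galois_ext_def using m cm eq by metis
qed

lemma restr_comp:
  assumes "\<forall>x\<in>K. \<tau> x \<in> K"
  shows "restr K (\<sigma> \<circ> \<tau>) = restr K \<sigma> \<circ> restr K \<tau>"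
  unfolding restr_def using assms by (auto simp: fun_eq_iff)

lemma restr_hom:
  assumes gal: "galois_ext F L" and K: "is_subfield K" "F \<subseteq> K" "K \<subseteq> L"
    and stab: "\<forall>\<sigma>\<in>Aut F L. \<forall>x\<in>K. \<sigma> x \<in> K"
  shows "group_hom (Gal F L) (Gal F K) (restr K)"
proof -
  have "restr K \<in> hom (Gal F L) (Gal F K)"
    unfolding hom_def using restr_Aut[OF _ K stab] by (auto intro!: restr_comp simp: stab)
  then show ?thesis
    unfolding group_hom_def group_hom_axioms_def using group_Gal by blast
qed

lemma solvable_quotient_gal:
  assumes gal: "galois_ext F L" and K: "is_subfield K" "F \<subseteq> K" "K \<subseteq> L"
    and stab: "\<forall>\<sigma>\<in>Aut F L. \<forall>x\<in>K. \<sigma> x \<in> K" and solv: "solvable (Gal F L)"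
  shows "solvable (Gal F K)"
  using group_hom.surj_hom_imp_solvable[OF restr_hom[OF gal K stab]] stable_galois(2)[OF gal K stab] solv
  by simp


text \<open>Inside a separable closure, every subextension E of a Galois extension L|F with
  solvable group is solvable: the Galois closure of E lies in L and is stable under
  Gal(L|F), hence Galois over F with group a quotient of Gal(L|F).\<close>
lemma solvable_subextension:
  assumes sep: "sep_alg_closure_of F" and gal: "galois_ext F L" and solv: "solvable (Gal F L)"
    and E: "F \<subseteq> E" "E \<subseteq> L"
  shows "solvable_ext F E"
proof -
  have L: "is_subfield L" using gal unfolding galois_ext_def ext_degree_def by blast
  define M where "M = galois_closure F E"
  have fam: "L \<in> {M. is_subfield M \<and> E \<subseteq> M \<and> galois_ext F M}" using L E(2) gal by blast
  have M: "is_subfield M" "F \<subseteq> M" "M \<subseteq> L"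
    unfolding M_def galois_closure_def
    by (rule is_subfield_Inter, use fam in blast, use fam in blast) (use fam E(1) in blast)+
  have stable: "\<forall>\<sigma>\<in>Aut F L. \<forall>x\<in>M. \<sigma> x \<in> M"
    using Aut_maps_galois_subfield[OF gal] M(3) unfolding M_def galois_closure_def by blast
  show ?thesis
    unfolding solvable_ext_def M_def[symmetric]
    using sep stable_galois(1)[OF gal M stable] solvable_quotient_gal[OF gal M stable solv]
    unfolding sep_alg_closure_of_def separable_ext_def by blast
qed

section \<open>Conjugacy of complements of a normal subgroup of prime order\<close>

context group
begin

lemma pow_card_subgroup:
  assumes P: "subgroup P G" and fin: "finite P" and z: "z \<in> P"
  shows "z [^] card P = \<one>"
proof -
  interpret P: group "G\<lparr>carrier := P\<rparr>" by (rule subgroup_imp_group[OF P])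
  have "z [^]\<^bsub>G\<lparr>carrier := P\<rparr>\<^esub> Coset.order (G\<lparr>carrier := P\<rparr>) = \<one>\<^bsub>G\<lparr>carrier := P\<rparr>\<^esub>"
    by (rule P.pow_order_eq_1) (simp add: z)
  then show ?thesis using nat_pow_consistent[of z "card P" P] by (simp add: Coset.order_def)
qed

lemma coprime_pow_one:
  assumes x: "x \<in> carrier G" and a: "x [^] a = \<one>" and b: "x [^] (b::nat) = \<one>" and cop: "coprime a b"
  shows "x = \<one>"
proof -
  have "ord x dvd a" "ord x dvd b" using a b pow_eq_id[OF x] by blast+
  hence "ord x dvd gcd a b" by simp
  hence "ord x = 1" using cop by simp
  then show ?thesis using ord_eq_1[OF x] by simp
qed

text \<open>If two distinct elements of a subgroup P of prime order conjugate h to the same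
  element, then h centralises P: their quotient z \<noteq> 1 commutes with h and generates P.\<close>
lemma centralizes_prime_subgroup:
  assumes P: "subgroup P G" and fin: "finite P" and cP: "card P = p" and pr: "prime p"
    and h: "h \<in> carrier G" and xx: "x \<in> P" "x' \<in> P" "x \<noteq> x'"
    and conj: "x \<otimes> h \<otimes> inv x = x' \<otimes> h \<otimes> inv x'" and y: "y \<in> P"
  shows "h \<otimes> y = y \<otimes> h"
proof -
  have xG: "x \<in> carrier G" "x' \<in> carrier G" using xx subgroup.mem_carrier[OF P] by blast+
  define z where "z = inv x' \<otimes> x"
  have zP: "z \<in> P" unfolding z_def using subgroup.m_closed[OF P subgroup.m_inv_closed[OF P xx(2)] xx(1)] .
  have zG: "z \<in> carrier G" using subgroup.mem_carrier[OF P zP] .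
  have z1: "z \<noteq> \<one>"
  proof
    assume "z = \<one>"
    moreover have "x = x' \<otimes> (inv x' \<otimes> x)" using xG by (simp add: m_assoc[symmetric])
    ultimately show False unfolding z_def using xG xx(3) by simp
  qed
  have zh: "z \<otimes> h = h \<otimes> z"
  proof -
    have "z \<otimes> h = inv x' \<otimes> (x \<otimes> h \<otimes> inv x) \<otimes> x"
      unfolding z_def using xG h by (simp add: m_assoc)
    also have "\<dots> = inv x' \<otimes> (x' \<otimes> h \<otimes> inv x') \<otimes> x" using conj by simp
    also have "\<dots> = h \<otimes> z"
      unfolding z_def using xG h by (simp add: m_assoc[symmetric])
    finally show ?thesis .
  qed
  have "ord z dvd p" using pow_card_subgroup[OF P fin zP] cP pow_eq_id[OF zG] by simp
  moreover have "ord z \<noteq> 1" using ord_eq_1[OF zG] z1 by simp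
  ultimately have oz: "ord z = p" using pr prime_nat_iff by blast
  have "generate G {z} \<subseteq> P" using generate_subgroup_incl[OF _ P] zP by blast
  moreover have "card (generate G {z}) = p" using generate_pow_card[OF zG] oz by simp
  ultimately have "generate G {z} = P" using card_subset_eq[OF fin] cP by metis
  then obtain k :: nat where k: "y = z [^] k"
    using y generate_pow_nat[OF zG] oz prime_gt_0_nat[OF pr] by auto
  show ?thesis unfolding k using group_commutes_pow[OF zh zG h, of k] by simp
qed

text \<open>Let P be a subgroup of prime order p normalised by h, where h and h y (y \<in> P)
  both have order dividing d, with d coprime to p.  Then h y is conjugate to h by an
  element of P.  If conjugation x \<mapsto> x h x\<inverse> is injective on P, its image is the coset
  h P by counting; otherwise h centralises P and then y = 1.\<close>
lemma conj_complement:
  assumes P: "subgroup P G" and fin: "finite P" and cP: "card P = p" and pr: "prime p"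
    and h: "h \<in> carrier G" and y: "y \<in> P"
    and norm: "\<forall>x\<in>P. inv h \<otimes> x \<otimes> h \<in> P"
    and hd: "h [^] d = \<one>" and hyd: "(h \<otimes> y) [^] (d::nat) = \<one>" and cop: "coprime d p"
  shows "\<exists>x\<in>P. x \<otimes> h \<otimes> inv x = h \<otimes> y"
proof -
  have PG: "P \<subseteq> carrier G" using subgroup.subset[OF P] .
  have yG: "y \<in> carrier G" using y PG by blast
  define \<psi> where "\<psi> x = x \<otimes> h \<otimes> inv x" for x
  show ?thesis
  proof (cases "inj_on \<psi> P")
    case True
    have sub: "\<psi> ` P \<subseteq> (\<lambda>z. h \<otimes> z) ` P"
    proof
      fix w assume "w \<in> \<psi> ` P"
      then obtain x where x: "x \<in> P" "w = \<psi> x" by blast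
      have xG: "x \<in> carrier G" using x PG by blast
      have "inv h \<otimes> x \<otimes> h \<in> P" using norm x by blast
      hence z: "inv h \<otimes> x \<otimes> h \<otimes> inv x \<in> P"
        using subgroup.m_closed[OF P] subgroup.m_inv_closed[OF P x(1)] by blast
      have "h \<otimes> (inv h \<otimes> x \<otimes> h \<otimes> inv x) = \<psi> x"
        unfolding \<psi>_def using h xG by (simp add: m_assoc[symmetric])
      then show "w \<in> (\<lambda>z. h \<otimes> z) ` P" using z x by (metis imageI)
    qed
    have "card (\<psi> ` P) = card P" by (rule card_image[OF True])
    moreover have "card ((\<lambda>z. h \<otimes> z) ` P) \<le> card P" by (rule card_image_le[OF fin])
    ultimately have "\<psi> ` P = (\<lambda>z. h \<otimes> z) ` P"
      using card_subset_eq[OF finite_imageI[OF fin] sub] card_mono[OF finite_imageI[OF fin] sub] by simp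
    then have "h \<otimes> y \<in> \<psi> ` P" using y by blast
    then obtain x where "x \<in> P" "h \<otimes> y = \<psi> x" by blast
    then show ?thesis unfolding \<psi>_def by metis
  next
    case False
    then obtain x x' where xx: "x \<in> P" "x' \<in> P" "x \<noteq> x'" "\<psi> x = \<psi> x'"
      unfolding inj_on_def by blast
    have yh: "h \<otimes> y = y \<otimes> h"
      by (rule centralizes_prime_subgroup[OF P fin cP pr h xx(1-3) _ y]) (use xx(4) \<psi>_def in simp)
    have "y [^] d = \<one>" using hyd hd pow_mult_distrib[OF yh h yG] yG by simp
    moreover have "y [^] p = \<one>" using pow_card_subgroup[OF P fin y] cP by simp
    ultimately have "y = \<one>" by (rule coprime_pow_one[OF yG _ _ cop])
    then show ?thesis using h subgroup.one_closed[OF P] by (intro bexI[of _ \<one>]) simp_all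
  qed
qed

end

lemma cyclic_comm: assumes "cyclic_ext K L" shows "comm_group (Gal K L)"
proof -
  obtain \<sigma> where \<sigma>: "\<sigma> \<in> Aut K L" "\<forall>\<tau>\<in>Aut K L. \<exists>n. \<tau> = \<sigma> ^^ n"
    using assms unfolding cyclic_ext_def by blast
  show ?thesis
  proof (rule group.group_comm_groupI[OF group_Gal])
    fix x y assume "x \<in> carrier (Gal K L)" "y \<in> carrier (Gal K L)"
    then have "\<exists>a. x = \<sigma> ^^ a" "\<exists>b. y = \<sigma> ^^ b" using \<sigma> by simp_all
    then obtain a b where "x = \<sigma> ^^ a" "y = \<sigma> ^^ b" by blast
    then show "x \<otimes>\<^bsub>Gal K L\<^esub> y = y \<otimes>\<^bsub>Gal K L\<^esub> x"
      by (simp add: funpow_add[symmetric] add.commute)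
  qed
qed

lemma comm_solvable: assumes "comm_group G" shows "solvable G"
proof -
  interpret comm_group G by (rule assms)
  have "(derived G ^^ 1) (carrier G) = {\<one>\<^bsub>G\<^esub>}" using derived_eq_singleton[OF subset_refl] by simp
  then have "solvable_seq G (carrier G)"
    by (rule trivial_derived_seq_imp_solvable[OF subgroup_self])
  then show ?thesis unfolding solvable_def .
qed

section \<open>Automorphisms, compositum and single generators\<close>

lemma compositum_props:
  shows "is_subfield (compositum E F')" "E \<subseteq> compositum E F'" "F' \<subseteq> compositum E F'"
    "\<And>K. is_subfield K \<Longrightarrow> E \<union> F' \<subseteq> K \<Longrightarrow> compositum E F' \<subseteq> K"
proof -
  have "UNIV \<in> {K. is_subfield K \<and> E \<union> F' \<subseteq> K}" using is_subfield_UNIV by blast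
  then show "is_subfield (compositum E F')" unfolding compositum_def
    by (intro is_subfield_Inter) auto
qed (auto simp: compositum_def)

text \<open>Two automorphisms of L = EF' that agree on E and on F' are equal, since the
  elements of L on which they agree form a subfield.\<close>
lemma Aut_eq_on_compositum:
  assumes \<sigma>: "\<sigma> \<in> Aut K L" and \<tau>: "\<tau> \<in> Aut K L" and L: "is_subfield L"
    and comp: "L = compositum E F'" and agree: "\<forall>x\<in>E \<union> F'. \<sigma> x = \<tau> x"
  shows "\<sigma> = \<tau>"
proof -
  have e: "is_embedding {} L \<sigma>" "is_embedding {} L \<tau>"
    using Aut_embedding[OF \<sigma> L] Aut_embedding[OF \<tau> L] embedding_mono by blast+
  have "is_subfield {x \<in> L. \<sigma> x = \<tau> x}"
    unfolding is_subfield_def using is_subfieldD[OF L]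
    by (auto simp: embedding_add[OF e(1)] embedding_add[OF e(2)] embedding_mult[OF e(1)]
        embedding_mult[OF e(2)] embedding_zero[OF e(1)] embedding_zero[OF e(2)] embedding_one[OF e(1)]
        embedding_one[OF e(2)] embedding_neg[OF e(1) L] embedding_neg[OF e(2) L]
        embedding_inverse[OF e(1) L] embedding_inverse[OF e(2) L])
  moreover have "E \<union> F' \<subseteq> {x \<in> L. \<sigma> x = \<tau> x}"
    using agree compositum_props(2,3) comp by blast
  ultimately have "L \<subseteq> {x \<in> L. \<sigma> x = \<tau> x}"
    using compositum_props(4) comp by blast
  then show ?thesis using Aut_eqI[OF \<sigma> \<tau>] by blast
qed

lemma Aut_funpow: "\<sigma> \<in> Aut K L \<Longrightarrow> \<sigma> ^^ n \<in> Aut K L"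
  by (induction n) (simp_all add: id_Aut Aut_comp)

lemma funpow_fixed: "h x = x \<Longrightarrow> (h ^^ n) x = x"
  by (induction n) simp_all

lemma conjugate_fixed_field:
  assumes \<sigma>: "\<sigma> \<in> Aut K L" and intertwine: "h2 \<circ> \<sigma> = \<sigma> \<circ> h1"
  shows "\<sigma> ` fixed_field L {h1} = fixed_field L {h2}"
proof -
  have image_sub: "\<tau> ` fixed_field L {g1} \<subseteq> fixed_field L {g2}"
    if \<tau>: "\<tau> \<in> Aut K L" and tg: "g2 \<circ> \<tau> = \<tau> \<circ> g1" for \<tau> g1 g2
  proof
    fix w assume "w \<in> \<tau> ` fixed_field L {g1}"
    then obtain e where e: "e \<in> L" "g1 e = e" "w = \<tau> e" unfolding fixed_field_def by blast
    have "g2 w = \<tau> (g1 e)" using fun_cong[OF tg, of e] e(3) by simp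
    then show "w \<in> fixed_field L {g2}" using e Aut_in[OF \<tau>] unfolding fixed_field_def by simp
  qed
  let ?\<sigma>' = "inv_into UNIV \<sigma>"
  have "?\<sigma>' \<circ> h2 = ?\<sigma>' \<circ> (h2 \<circ> \<sigma>) \<circ> ?\<sigma>'" using Aut_inv(2)[OF \<sigma>] by (simp add: comp_assoc)
  also have "\<dots> = (?\<sigma>' \<circ> \<sigma>) \<circ> h1 \<circ> ?\<sigma>'" using intertwine by (simp add: comp_assoc)
  finally have "h1 \<circ> ?\<sigma>' = ?\<sigma>' \<circ> h2" using Aut_inv(3)[OF \<sigma>] by simp
  then have "?\<sigma>' ` fixed_field L {h2} \<subseteq> fixed_field L {h1}" using image_sub Aut_inv(1)[OF \<sigma>] by blast
  then have "\<sigma> ` ?\<sigma>' ` fixed_field L {h2} \<subseteq> \<sigma> ` fixed_field L {h1}" by (rule image_mono)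
  then have "fixed_field L {h2} \<subseteq> \<sigma> ` fixed_field L {h1}"
    using Aut_inv(2)[OF \<sigma>] by (simp add: image_comp)
  with image_sub[OF \<sigma> intertwine] show ?thesis by blast
qed

lemma conjugate_over_Aut:
  assumes \<sigma>: "\<sigma> \<in> Aut F L" and L: "is_subfield L" and EL: "E \<subseteq> L"
  shows "conjugate_over F E (\<sigma> ` E)"
  unfolding conjugate_over_def
  using Aut_D(2,3,4)[OF \<sigma>] Aut_one[OF \<sigma> L] EL by (intro exI[of _ \<sigma>]) blast

section \<open>The setting: a cyclic extension of degree p over a cyclic extension of degree d\<close>

locale cyclic_tower =
  fixes F F' L :: "'a::field set" and p d :: nat
  assumes prime_p: "prime p" and sep: "sep_alg_closure_of F"
    and cycQ: "cyclic_ext F F'" and degQ: "ext_degree F F' d" and d_dvd: "d dvd p - 1"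
    and cycP: "cyclic_ext F' L" and degP: "ext_degree F' L p" and gal: "galois_ext F L"
begin

lemma subfields: "is_subfield F" "is_subfield F'" "is_subfield L" "F \<subseteq> F'" "F' \<subseteq> L"
  using degQ degP unfolding ext_degree_def by auto

lemma degL: "ext_degree F L (d * p)"
  by (rule ext_degree_tower[OF degQ degP])

lemma card_P: "card (Aut F' L) = p"
  using galois_card[OF _ degP] cycP unfolding cyclic_ext_def by blast

lemma card_Q: "card (Aut F F') = d"
  using galois_card[OF _ degQ] cycQ unfolding cyclic_ext_def by blast

lemma d_facts: "d \<ge> 1" "d < p" "coprime d p"
proof -
  show d1: "d \<ge> 1" using ext_degree_pos[OF degQ] .
  have p2: "p \<ge> 2" using prime_p by (simp add: prime_ge_2_nat)
  have "d \<le> p - 1" using dvd_imp_le[OF d_dvd] p2 by simp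
  then show dp: "d < p" using p2 by simp
  have "\<not> p dvd d" using dp d1 by (auto dest: dvd_imp_le)
  then show "coprime d p" using prime_imp_coprime[OF prime_p] by (simp add: coprime_commute)
qed

lemma finite_G: "finite (Aut F L)" using Aut_finite[OF degL] by blast

lemma P_subgroup: "subgroup (Aut F' L) (Gal F L)" by (rule subgroup_Aut[OF subfields(4)])

text \<open>F' is stable under Gal(L|F), being Galois over F.\<close>
lemma F'_stable: "\<forall>\<sigma>\<in>Aut F L. \<forall>x\<in>F'. \<sigma> x \<in> F'"
  using Aut_maps_galois_subfield[OF gal] cycQ subfields(5) unfolding cyclic_ext_def by blast

abbreviation "\<rho> \<equiv> restr F'"

lemma rho_hom: "group_hom (Gal F L) (Gal F F') \<rho>"
  by (rule restr_hom[OF gal subfields(2,4,5) F'_stable])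

lemma rho_surj: "\<rho> ` Aut F L = Aut F F'"
  by (rule stable_galois(2)[OF gal subfields(2,4,5) F'_stable])

lemma rho_kernel: "\<sigma> \<in> Aut F L \<Longrightarrow> \<rho> \<sigma> = id \<longleftrightarrow> \<sigma> \<in> Aut F' L"
  unfolding restr_def Aut_def by (auto simp: fun_eq_iff)

lemma kernel_rho: "kernel (Gal F L) (Gal F F') \<rho> = Aut F' L"
  unfolding kernel_def using rho_kernel subgroup.subset[OF P_subgroup] by auto

lemma rho_funpow: "\<sigma> \<in> Aut F L \<Longrightarrow> \<rho> (\<sigma> ^^ n) = \<rho> \<sigma> ^^ n"
  using group_hom.hom_nat_pow[OF rho_hom, of \<sigma> n] by (simp add: Gal_pow)

text \<open>Gal(L|F) is solvable: an extension of the cyclic group Gal(F'|F) by the cyclic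
  group Gal(L|F').\<close>
lemma solvable_G: "solvable (Gal F L)"
proof (rule solvable_condition)
  show "group_hom (Gal F' L) (Gal F L) id"
    unfolding group_hom_def group_hom_axioms_def hom_def
    using group_Gal subgroup.subset[OF P_subgroup] by auto
  show "group_hom (Gal F L) (Gal F F') \<rho>" by (rule rho_hom)
  show "\<rho> ` carrier (Gal F L) = carrier (Gal F F')" using rho_surj by simp
  show "kernel (Gal F L) (Gal F F') \<rho> \<subseteq> id ` carrier (Gal F' L)"
    using kernel_rho by simp
  show "solvable (Gal F' L)" by (rule comm_solvable[OF cyclic_comm[OF cycP]])
  show "solvable (Gal F F')" by (rule comm_solvable[OF cyclic_comm[OF cycQ]])
qed

definition "\<theta> = (SOME \<sigma>. \<sigma> \<in> Aut F F' \<and> (\<forall>\<tau>\<in>Aut F F'. \<exists>n. \<tau> = \<sigma> ^^ n))"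

lemma theta: "\<theta> \<in> Aut F F'" "\<forall>\<tau>\<in>Aut F F'. \<exists>n. \<tau> = \<theta> ^^ n"
proof -
  have "\<exists>\<sigma>. \<sigma> \<in> Aut F F' \<and> (\<forall>\<tau>\<in>Aut F F'. \<exists>n. \<tau> = \<sigma> ^^ n)"
    using cycQ unfolding cyclic_ext_def by blast
  then have "\<theta> \<in> Aut F F' \<and> (\<forall>\<tau>\<in>Aut F F'. \<exists>n. \<tau> = \<theta> ^^ n)"
    unfolding \<theta>_def by (rule someI_ex)
  then show "\<theta> \<in> Aut F F'" "\<forall>\<tau>\<in>Aut F F'. \<exists>n. \<tau> = \<theta> ^^ n" by blast+
qed

lemma theta_pow_one: "\<theta> [^]\<^bsub>Gal F F'\<^esub> k = id \<longleftrightarrow> d dvd k"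
proof -
  interpret Q: group "Gal F F'" by (rule group_Gal)
  have th: "\<theta> \<in> carrier (Gal F F')" using theta by simp
  have "carrier (Gal F F') \<subseteq> generate (Gal F F') {\<theta>}"
  proof
    fix \<tau> assume "\<tau> \<in> carrier (Gal F F')"
    then obtain n where n: "\<tau> = \<theta> ^^ n" using theta by auto
    have "\<theta> [^]\<^bsub>Gal F F'\<^esub> (int n) \<in> generate (Gal F F') {\<theta>}"
      using Q.generate_pow[OF th] by blast
    then show "\<tau> \<in> generate (Gal F F') {\<theta>}" using n by (simp add: int_pow_int Gal_pow)
  qed
  moreover have "generate (Gal F F') {\<theta>} \<subseteq> carrier (Gal F F')"
    using Q.generate_is_subgroup[of "{\<theta>}"] th subgroup.subset by blast
  ultimately have "Q.ord \<theta> = d" using Q.generate_pow_card[OF th] card_Q by simp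
  then show ?thesis using Q.pow_eq_id[OF th] by simp
qed

text \<open>A subextension of L of degree p over F generates L together with F': otherwise
  EF' = F' by primality of [L:F'] = p, i.e. E \<subseteq> F', contradicting p > d.\<close>
lemma degree_p_compositum:
  assumes E: "is_subfield E" "F \<subseteq> E" "E \<subseteq> L" and deg: "ext_degree F E p"
  shows "compositum E F' = L"
proof -
  let ?C = "compositum E F'"
  have C: "is_subfield ?C" "E \<subseteq> ?C" "F' \<subseteq> ?C"
    by (rule compositum_props(1), rule compositum_props(2), rule compositum_props(3))
  have CL: "?C \<subseteq> L" by (rule compositum_props(4)) (use subfields E in auto)
  obtain c1 c2 where c1: "ext_degree F' ?C c1" and c2: "ext_degree ?C L c2"
    using ext_degree_sub[OF degP C(1,3) CL] by blast
  have c12: "c1 * c2 = p" by (rule ext_degree_tower_eq[OF degP c1 c2])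
  then have "c1 = 1 \<or> c1 = p" using prime_p prime_nat_iff by (metis dvd_triv_left)
  then show ?thesis
  proof
    assume "c1 = 1"
    hence "E \<subseteq> F'" using ext_degree_one c1 C(2) by blast
    then obtain e where e: "ext_degree E F' e" using ext_degree_sub[OF degQ E(1,2)] by blast
    have "p * e = d" by (rule ext_degree_tower_eq[OF degQ deg e])
    then show ?thesis using ext_degree_pos[OF e] d_facts(2) by (metis less_le_trans mult.right_neutral
          mult_le_mono2 not_le)
  next
    assume "c1 = p"
    hence "c2 = 1" using c12 prime_p by (simp add: prime_gt_0_nat)
    then show ?thesis using ext_degree_one c2 by blast
  qed
qed

lemma complement_facts:
  assumes deg: "ext_degree F E p" and comp: "L = compositum E F'"
  shows "is_subfield E" "F \<subseteq> E" "E \<subseteq> L" "card (Aut E L) = d"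
proof -
  show E: "is_subfield E" "F \<subseteq> E" using deg unfolding ext_degree_def by blast+
  show EL: "E \<subseteq> L" using compositum_props(2)[of E F'] comp by simp
  obtain m k where m: "ext_degree F E m" and k: "ext_degree E L k" and ck: "card (Aut E L) = k"
    using galois_intermediate[OF gal E EL] by metis
  have "m * k = d * p" by (rule ext_degree_tower_eq[OF degL m k])
  then show "card (Aut E L) = d"
    using ext_degree_unique[OF m deg] ck prime_p by (simp add: prime_gt_0_nat)
qed

lemma complement_pow_d:
  assumes deg: "ext_degree F E p" and comp: "L = compositum E F'" and h: "h \<in> Aut E L"
  shows "h [^]\<^bsub>Gal F L\<^esub> d = \<one>\<^bsub>Gal F L\<^esub>"
proof -
  interpret G: group "Gal F L" by (rule group_Gal)
  note E = complement_facts[OF deg comp]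
  show ?thesis
    using G.pow_card_subgroup[OF subgroup_Aut[OF E(2)] _ h] E(4) finite_subset[OF Aut_mono[OF E(2)] finite_G]
    by simp
qed

text \<open>Gal(L|F) contains an element of order exactly d: the p-th power of a lift of \<theta>.\<close>
lemma exists_element_of_order_d:
  obtains h where "h \<in> Aut F L" "group.ord (Gal F L) h = d"
proof -
  interpret G: group "Gal F L" by (rule group_Gal)
  interpret rh: group_hom "Gal F L" "Gal F F'" \<rho> by (rule rho_hom)
  obtain g where g: "g \<in> Aut F L" "\<rho> g = \<theta>" using theta(1) rho_surj by (metis imageE)
  have gc: "g \<in> carrier (Gal F L)" using g by simp
  define h where "h = g [^]\<^bsub>Gal F L\<^esub> p"
  have hc: "h \<in> carrier (Gal F L)" unfolding h_def using G.nat_pow_closed[OF gc] .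
  have rho_g_pow: "\<rho> (g [^]\<^bsub>Gal F L\<^esub> k) = \<theta> [^]\<^bsub>Gal F F'\<^esub> k" for k :: nat
    using rh.hom_nat_pow[OF gc] g by simp
  txt \<open>g^d lies in the kernel Gal(L|F'), which has order p; hence h^d = (g^d)^p = 1.\<close>
  have "g [^]\<^bsub>Gal F L\<^esub> d \<in> Aut F' L"
    using kernel_rho rho_g_pow[of d] theta_pow_one G.nat_pow_closed[OF gc] unfolding kernel_def by auto
  then have "(g [^]\<^bsub>Gal F L\<^esub> d) [^]\<^bsub>Gal F L\<^esub> p = id"
    using G.pow_card_subgroup[OF P_subgroup finite_subset[OF subgroup.subset[OF P_subgroup]]] card_P finite_G
    by simp
  then have "h [^]\<^bsub>Gal F L\<^esub> d = \<one>\<^bsub>Gal F L\<^esub>"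
    unfolding h_def using G.nat_pow_pow[OF gc] by (simp add: mult.commute)
  then have "G.ord h dvd d" using G.pow_eq_id[OF hc] by simp
  txt \<open>Conversely \<rho>(h^k) = \<theta>^(pk), so d divides p k and hence k.\<close>
  moreover have "d dvd G.ord h"
  proof -
    have "\<theta> [^]\<^bsub>Gal F F'\<^esub> (p * G.ord h) = \<rho> (h [^]\<^bsub>Gal F L\<^esub> G.ord h)"
      unfolding h_def using rho_g_pow G.nat_pow_pow[OF gc] by simp
    also have "\<dots> = id" using G.pow_ord_eq_1[OF hc] rh.hom_one by simp
    finally show ?thesis using theta_pow_one d_facts(3) by (simp add: coprime_dvd_mult_right_iff)
  qed
  ultimately show ?thesis using that hc by (simp add: dvd_antisym)
qed

text \<open>Existence: the fixed field of the cyclic subgroup generated by an element of order d.\<close>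
lemma existence: "\<exists>E. ext_degree F E p \<and> solvable_ext F E \<and> L = compositum E F'"
proof -
  interpret G: group "Gal F L" by (rule group_Gal)
  obtain h where h: "h \<in> Aut F L" "G.ord h = d" by (rule exists_element_of_order_d)
  define H where "H = generate (Gal F L) {h}"
  have H: "subgroup H (Gal F L)" unfolding H_def by (rule G.generate_is_subgroup) (use h in simp)
  have "card H = d" unfolding H_def using G.generate_pow_card h by simp
  then have E0: "is_subfield (fixed_field L H)" "F \<subseteq> fixed_field L H" "fixed_field L H \<subseteq> L"
    "ext_degree (fixed_field L H) L d"
    using fixed_field_degree[OF degL, of H] subgroup.subset[OF H] subgroup.one_closed[OF H]
      subgroup.m_closed[OF H] by auto
  obtain a where a: "ext_degree F (fixed_field L H) a" using ext_degree_sub[OF degL E0(1-3)] by blast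
  have "a * d = d * p" by (rule ext_degree_tower_eq[OF degL a E0(4)])
  then have deg: "ext_degree F (fixed_field L H) p" using a d_facts(1) by simp
  have "solvable_ext F (fixed_field L H)"
    by (rule solvable_subextension[OF sep gal solvable_G E0(2,3)])
  then show ?thesis using deg degree_p_compositum[OF E0(1-3) deg] by metis
qed

text \<open>Containment: an F-embedding of E \<subseteq> L extends to an automorphism of L.\<close>
lemma conjugates_in_L:
  assumes deg: "ext_degree F E p" and comp: "L = compositum E F'" and conj: "conjugate_over F E E'"
  shows "E' \<subseteq> L"
proof -
  note E = complement_facts[OF deg comp]
  obtain \<sigma> where \<sigma>: "is_embedding F E \<sigma>" "\<sigma> ` E = E'"
    using conj unfolding conjugate_over_def is_embedding_def by blast
  obtain \<tau> where \<tau>: "\<tau> \<in> Aut F L" "\<forall>x\<in>E. \<sigma> x = \<tau> x"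
    using embedding_extends[OF gal E(1-3) \<sigma>(1)] by blast
  show ?thesis using \<sigma>(2) \<tau> Aut_in[OF \<tau>(1)] E(3) by auto
qed

text \<open>Gal(L|E) meets Gal(L|F') trivially, so \<rho> maps it isomorphically onto Gal(F'|F).
  Hence E is the fixed field of the single element h of Gal(L|E) lifting \<theta>, whose
  powers exhaust Gal(L|E).\<close>
lemma complement_generator:
  assumes deg: "ext_degree F E p" and comp: "L = compositum E F'"
  obtains h where "h \<in> Aut E L" "\<rho> h = \<theta>" "fixed_field L {h} = E"
proof -
  note E = complement_facts[OF deg comp]
  have HG: "Aut E L \<subseteq> Aut F L" by (rule Aut_mono[OF E(2)])
  have inj: "inj_on \<rho> (Aut E L)"
  proof (rule inj_onI)
    fix a b assume a: "a \<in> Aut E L" and b: "b \<in> Aut E L" and ab: "\<rho> a = \<rho> b"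
    have "\<forall>x\<in>E \<union> F'. a x = b x"
      using Aut_D(4)[OF a] Aut_D(4)[OF b] ab unfolding restr_eq_iff by auto
    then show "a = b" by (rule Aut_eq_on_compositum[OF a b subfields(3) comp])
  qed
  have "\<rho> ` Aut E L = Aut F F'"
    using card_subset_eq[OF Aut_finite(1)[OF degQ]] rho_surj HG card_image[OF inj] E(4) card_Q
    by (metis image_mono)
  then obtain h where h: "h \<in> Aut E L" "\<rho> h = \<theta>" using theta(1) by (metis imageE)
  have powers: "\<exists>n. \<tau> = h ^^ n" if \<tau>: "\<tau> \<in> Aut E L" for \<tau>
  proof -
    obtain n where "\<rho> \<tau> = \<theta> ^^ n" using theta(2) rho_surj \<tau> HG by blast
    also have "\<dots> = \<rho> (h ^^ n)" using rho_funpow h HG by auto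
    finally show ?thesis using inj \<tau> Aut_funpow[OF h(1)] unfolding inj_on_def by blast
  qed
  have "fixed_field L {h} \<subseteq> fixed_field L (Aut E L)"
  proof
    fix x assume "x \<in> fixed_field L {h}"
    then have x: "x \<in> L" "h x = x" unfolding fixed_field_def by auto
    have "\<tau> x = x" if "\<tau> \<in> Aut E L" for \<tau> using powers[OF that] funpow_fixed[of h x, OF x(2)] by metis
    then show "x \<in> fixed_field L (Aut E L)" using x(1) unfolding fixed_field_def by blast
  qed
  moreover have "E \<subseteq> fixed_field L {h}" unfolding fixed_field_def using E(3) Aut_D(4)[OF h(1)] by blast
  ultimately have "fixed_field L {h} = E" using fixed_field_Aut[OF gal E(1-3)] by blast
  then show ?thesis using that h by blast
qed

text \<open>Two lifts h1, h2 of \<theta> of order dividing d are conjugate by an element x of the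
  normal subgroup Gal(L|F') of order p: h2 = h1 y with y \<in> Gal(L|F'), and the
  complement lemma applies.\<close>
lemma intertwining_element:
  assumes h1: "h1 \<in> Aut F L" "\<rho> h1 = \<theta>" "h1 [^]\<^bsub>Gal F L\<^esub> d = \<one>\<^bsub>Gal F L\<^esub>"
    and h2: "h2 \<in> Aut F L" "\<rho> h2 = \<theta>" "h2 [^]\<^bsub>Gal F L\<^esub> d = \<one>\<^bsub>Gal F L\<^esub>"
  obtains x where "x \<in> Aut F L" "h2 \<circ> x = x \<circ> h1"
proof -
  interpret G: group "Gal F L" by (rule group_Gal)
  interpret rh: group_hom "Gal F L" "Gal F F'" \<rho> by (rule rho_hom)
  interpret P: normal "Aut F' L" "Gal F L" using rh.normal_kernel kernel_rho by simp
  have h1c: "h1 \<in> carrier (Gal F L)" and h2c: "h2 \<in> carrier (Gal F L)" using h1(1) h2(1) by simp_all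
  define y where "y = inv\<^bsub>Gal F L\<^esub> h1 \<otimes>\<^bsub>Gal F L\<^esub> h2"
  have yc: "y \<in> carrier (Gal F L)" unfolding y_def using h1c h2c by (intro G.m_closed G.inv_closed)
  have "\<rho> y = inv\<^bsub>Gal F F'\<^esub> \<theta> \<otimes>\<^bsub>Gal F F'\<^esub> \<theta>"
    unfolding y_def using rh.hom_mult[OF G.inv_closed[OF h1c] h2c] rh.hom_inv[OF h1c] h1(2) h2(2) by simp
  also have "\<dots> = id" using rh.H.l_inv theta(1) by simp
  finally have yP: "y \<in> Aut F' L" using rho_kernel yc by simp
  have hy: "h1 \<otimes>\<^bsub>Gal F L\<^esub> y = h2" using G.inv_solve_left'[OF yc h1c h2c] y_def by metis
  have norm: "\<forall>z\<in>Aut F' L. inv\<^bsub>Gal F L\<^esub> h1 \<otimes>\<^bsub>Gal F L\<^esub> z \<otimes>\<^bsub>Gal F L\<^esub> h1 \<in> Aut F' L"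
    using P.inv_op_closed1 h1c by blast
  obtain x where x: "x \<in> Aut F' L" "x \<otimes>\<^bsub>Gal F L\<^esub> h1 \<otimes>\<^bsub>Gal F L\<^esub> inv\<^bsub>Gal F L\<^esub> x = h2"
    using G.conj_complement[OF P_subgroup Aut_finite(1)[OF degP] card_P prime_p h1c yP norm
        h1(3) _ d_facts(3)] hy h2(3)
    by blast
  have xc: "x \<in> carrier (Gal F L)" using x(1) subgroup.subset[OF P_subgroup] by blast
  have "x \<otimes>\<^bsub>Gal F L\<^esub> h1 = h2 \<otimes>\<^bsub>Gal F L\<^esub> x"
    using G.inv_solve_right[OF h2c G.m_closed[OF xc h1c] xc] x(2) by metis
  then show ?thesis using that xc by simp
qed

text \<open>Uniqueness up to conjugacy: E1 and E2 are the fixed fields of lifts h1, h2 of \<theta>,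
  and an automorphism x intertwining h1 with h2 maps E1 onto E2.\<close>
lemma conjugacy:
  assumes d1: "ext_degree F E1 p" "L = compositum E1 F'" and d2: "ext_degree F E2 p" "L = compositum E2 F'"
  shows "conjugate_over F E1 E2"
proof -
  obtain h1 where h1: "h1 \<in> Aut E1 L" "\<rho> h1 = \<theta>" "fixed_field L {h1} = E1"
    using complement_generator[OF d1] by metis
  obtain h2 where h2: "h2 \<in> Aut E2 L" "\<rho> h2 = \<theta>" "fixed_field L {h2} = E2"
    using complement_generator[OF d2] by metis
  note E1 = complement_facts[OF d1] and E2 = complement_facts[OF d2]
  obtain x where x: "x \<in> Aut F L" "h2 \<circ> x = x \<circ> h1"
    using intertwining_element[of h1 h2] h1 h2 Aut_mono[OF E1(2)] Aut_mono[OF E2(2)]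
      complement_pow_d[OF d1 h1(1)] complement_pow_d[OF d2 h2(1)] by blast
  have "x ` E1 = E2" using conjugate_fixed_field[OF x] h1(3) h2(3) by simp
  then show ?thesis using conjugate_over_Aut[OF x(1) subfields(3) E1(3)] by simp
qed

end

theorem lemma14:
  fixes F F' L :: "'a::field set" and p :: nat
  assumes "prime p"
    and "sep_alg_closure_of F"
    and "cyclic_ext F F'" and "\<exists>d. ext_degree F F' d \<and> d dvd p - 1"
    and "cyclic_ext F' L" and "ext_degree F' L p"
    and "galois_ext F L"
  shows "(\<exists>E. ext_degree F E p \<and> solvable_ext F E \<and> L = compositum E F') \<and>
         (\<forall>E1 E2. ext_degree F E1 p \<and> L = compositum E1 F' \<and>
                  ext_degree F E2 p \<and> L = compositum E2 F' \<longrightarrow> conjugate_over F E1 E2) \<and>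
         (\<forall>E E'. ext_degree F E p \<and> L = compositum E F' \<and> conjugate_over F E E' \<longrightarrow> E' \<subseteq> L)"
proof -
  obtain d where d: "ext_degree F F' d" "d dvd p - 1" using assms(4) by blast
  interpret cyclic_tower F F' L p d
    by unfold_locales (use assms d in auto)
  show ?thesis using existence conjugacy conjugates_in_L by blast
qed

end
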